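(* Let $\lambda\in ba(\mathcal A)$ and let $(h_a)_{a\in\mathfrak A}$ be a uniformly bounded net in $\mathcal B(\mathcal A)$. There exists a uniformly bounded sequence $(f_n)$ in $\mathcal S(\mathcal A)$ which is Cauchy in $L^1(\mu)$ for all $\mu\in ba(\mathcal A,\lambda)$ and such that $\operatorname{LIM}_a\mu(h_a1_A)=\lim_n\mu(f_n1_A)$ for all $A\in\mathcal A$ and $\mu\in ba(\mathcal A,\lambda)$. If $(h_a)$ is increasing, $(f_n)$ can be chosen increasing as well.
   Context: $\mathcal A$ algebra of subsets of $\Omega$; $ba(\mathcal A)$ bounded finitely additive real set functions, total variation $|\mu|$. $\mathcal S(\mathcal A)$ the $\mathcal A$-simple functions, $\mathcal B(\mathcal A)$ its closure under the sup norm. $ba(\mathcal A,\lambda)=\{\mu:\mu\ll\lambda\}$, where $\mu\ll\lambda$ means for every $\varepsilon>0$ there is $\delta>0$ with $|\lambda|(A)<\delta\Rightarrow|\mu|(A)<\varepsilon$. $\operatorname{LIM}_a$ denotes a fixed Banach limit over the directed set $\mathfrak A$ (a norm-one positive linear functional on bounded real nets indexed by $\mathfrak A$ extending the limit of convergent nets). A sequence $(f_n)$ of simple functions is Cauchy in $L^1(\mu)$ if $\lim_n\sup_{p,q}|\mu|(|f_{n+p}-f_{n+q}|)=0$. *)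

theory Defs
  imports "HOL-Analysis.Analysis"
begin

text \<open>Set functions on an algebra M of subsets of Omega (library locale algebra).
  Values of set functions outside M and of functions outside Omega are irrelevant.\<close>

definition fin_add :: "'a set set \<Rightarrow> ('a set \<Rightarrow> real) \<Rightarrow> bool" where
  "fin_add M mu \<longleftrightarrow> (\<forall>A\<in>M. \<forall>B\<in>M. A \<inter> B = {} \<longrightarrow> mu (A \<union> B) = mu A + mu B)"

definition ba :: "'a set set \<Rightarrow> ('a set \<Rightarrow> real) set" where
  "ba M = {mu. fin_add M mu \<and> (\<exists>c. \<forall>A\<in>M. \<bar>mu A\<bar> \<le> c)}"

definition tv :: "'a set set \<Rightarrow> ('a set \<Rightarrow> real) \<Rightarrow> 'a set \<Rightarrow> real" where
  "tv M mu A = Sup {(\<Sum>B\<in>P. \<bar>mu B\<bar>) | P. finite P \<and> P \<subseteq> M \<and> disjoint P \<and> \<Union>P \<subseteq> A}"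

definition ba_ac :: "'a set set \<Rightarrow> ('a set \<Rightarrow> real) \<Rightarrow> ('a set \<Rightarrow> real) set" where
  "ba_ac M lam = {mu \<in> ba M. \<forall>\<epsilon>>0. \<exists>\<delta>>0. \<forall>A\<in>M. tv M lam A < \<delta> \<longrightarrow> tv M mu A < \<epsilon>}"

definition simple_fn :: "'a set \<Rightarrow> 'a set set \<Rightarrow> ('a \<Rightarrow> real) \<Rightarrow> bool" where
  "simple_fn \<Omega> M f \<longleftrightarrow> finite (f ` \<Omega>) \<and> (\<forall>c. {x\<in>\<Omega>. f x = c} \<in> M)"

definition sint :: "'a set \<Rightarrow> ('a set \<Rightarrow> real) \<Rightarrow> ('a \<Rightarrow> real) \<Rightarrow> real" where
  "sint \<Omega> mu f = (\<Sum>c\<in>f ` \<Omega>. c * mu {x\<in>\<Omega>. f x = c})"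

definition bfun :: "'a set \<Rightarrow> 'a set set \<Rightarrow> ('a \<Rightarrow> real) \<Rightarrow> bool" where
  "bfun \<Omega> M h \<longleftrightarrow> (\<forall>\<epsilon>>0. \<exists>s. simple_fn \<Omega> M s \<and> (\<forall>x\<in>\<Omega>. \<bar>h x - s x\<bar> < \<epsilon>))"

definition fa_int :: "'a set \<Rightarrow> 'a set set \<Rightarrow> ('a set \<Rightarrow> real) \<Rightarrow> ('a \<Rightarrow> real) \<Rightarrow> real" where
  "fa_int \<Omega> M mu h = (THE l. \<forall>s. ((\<forall>n. simple_fn \<Omega> M (s n)) \<and>
      (\<forall>\<epsilon>>0. \<exists>N. \<forall>n\<ge>N. \<forall>x\<in>\<Omega>. \<bar>h x - s n x\<bar> \<le> \<epsilon>))
      \<longrightarrow> (\<lambda>n. sint \<Omega> mu (s n)) \<longlonglongrightarrow> l)"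

text \<open>Cauchy in L^1(mu): lim_n sup_{p,q} |mu|(|f_(n+p) - f_(n+q)|) = 0, written out with epsilon.\<close>
definition l1_cauchy :: "'a set \<Rightarrow> 'a set set \<Rightarrow> ('a set \<Rightarrow> real) \<Rightarrow> (nat \<Rightarrow> 'a \<Rightarrow> real) \<Rightarrow> bool" where
  "l1_cauchy \<Omega> M mu f \<longleftrightarrow> (\<forall>\<epsilon>>0. \<exists>N. \<forall>n\<ge>N. \<forall>p q.
      sint \<Omega> (tv M mu) (\<lambda>x. \<bar>f (n + p) x - f (n + q) x\<bar>) \<le> \<epsilon>)"

definition directed :: "('i \<Rightarrow> 'i \<Rightarrow> bool) \<Rightarrow> bool" where
  "directed ord \<longleftrightarrow> (\<forall>a. ord a a) \<and> (\<forall>a b c. ord a b \<longrightarrow> ord b c \<longrightarrow> ord a c)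
     \<and> (\<forall>a b. \<exists>c. ord a c \<and> ord b c)"

definition bounded_net :: "('i \<Rightarrow> real) \<Rightarrow> bool" where
  "bounded_net x \<longleftrightarrow> (\<exists>c. \<forall>a. \<bar>x a\<bar> \<le> c)"

definition net_tendsto :: "('i \<Rightarrow> 'i \<Rightarrow> bool) \<Rightarrow> ('i \<Rightarrow> real) \<Rightarrow> real \<Rightarrow> bool" where
  "net_tendsto ord x l \<longleftrightarrow> (\<forall>\<epsilon>>0. \<exists>a0. \<forall>a. ord a0 a \<longrightarrow> \<bar>x a - l\<bar> < \<epsilon>)"

definition banach_limit :: "('i \<Rightarrow> 'i \<Rightarrow> bool) \<Rightarrow> (('i \<Rightarrow> real) \<Rightarrow> real) \<Rightarrow> bool" where
  "banach_limit ord L \<longleftrightarrow>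
     (\<forall>x y. bounded_net x \<longrightarrow> bounded_net y \<longrightarrow> L (\<lambda>a. x a + y a) = L x + L y)
   \<and> (\<forall>c x. bounded_net x \<longrightarrow> L (\<lambda>a. c * x a) = c * L x)
   \<and> (\<forall>x. bounded_net x \<longrightarrow> (\<forall>a. 0 \<le> x a) \<longrightarrow> 0 \<le> L x)
   \<and> (\<forall>x c. (\<forall>a. \<bar>x a\<bar> \<le> c) \<longrightarrow> \<bar>L x\<bar> \<le> c)
   \<and> (\<forall>x l. bounded_net x \<longrightarrow> net_tendsto ord x l \<longrightarrow> L x = l)"

end

theory Submission
  imports Defs
begin

(* Let nu = |lam| and Phi(E) = LIM_a nu(h_a 1_E) for E in M; Phi is finitely
   additive with |Phi| <= c nu.
   1. Step densities: every rho with |rho| <= C nu is uniformly approximated by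
      A |-> sum_B rho(B)/nu(B) nu(B \<inter> A) over a finite partition of nearly maximal "energy"
      sum_B rho(B)^2/nu(B).  Applied to Phi this yields simple f_n with |f_n| <= c and
      nu(f_n 1_E) -> Phi(E) uniformly in E (a "Phi-approximation").
   2. Every Phi-approximation satisfies the conclusion: each mu << lam is uniformly close to
      some sum_i w_i nu(B_i \<inter> .) (approximate Radon-Nikodym theorem, by truncation and 1.),
      which transfers the convergence from nu to mu and through the Banach limit; the L^1
      Cauchy property follows from absolute continuity.
   3. For an increasing net, Phi(E) = sup_a nu(h_a 1_E); running maxima of lower simple
      approximations of h along an increasing cofinal sequence of indices give an increasing
      Phi-approximation. *)

section \<open>Finitely additive set functions\<close>

context algebra
begin

lemma fin_add_empty: "fin_add M mu \<Longrightarrow> mu {} = 0"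
  unfolding fin_add_def by (metis Un_empty_left empty_sets inf_bot_left add_cancel_left_left)

lemma fin_add_UN:
  assumes "fin_add M mu" "finite I" "\<And>i. i \<in> I \<Longrightarrow> B i \<in> M" "disjoint_family_on B I"
  shows "mu (\<Union>i\<in>I. B i) = (\<Sum>i\<in>I. mu (B i))"
  using assms(2-4)
proof (induction I rule: finite_induct)
  case empty
  then show ?case using fin_add_empty[OF assms(1)] by simp
next
  case (insert j I)
  have "disjoint_family_on B I" using insert.prems(2) by (auto simp: disjoint_family_on_def)
  moreover have "B j \<inter> (\<Union>i\<in>I. B i) = {}" using insert.prems(2) insert.hyps(2)
    by (auto simp: disjoint_family_on_def)
  moreover have "(\<Union>i\<in>I. B i) \<in> M" using insert by auto
  ultimately show ?case
    using assms(1) insert unfolding fin_add_def by simp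
qed

lemma fin_add_Union:
  assumes "fin_add M mu" "finite P" "P \<subseteq> M" "disjoint P"
  shows "mu (\<Union>P) = (\<Sum>C\<in>P. mu C)"
  using fin_add_UN[OF assms(1,2), of id] assms(3,4)
  by (simp add: disjoint_family_on_def disjoint_def subset_iff)

lemma fin_add_split:
  assumes "fin_add M mu" "X \<in> M" "A \<in> M"
  shows "mu X = mu (X \<inter> A) + mu (X - A)"
proof -
  have "X \<inter> A \<in> M" "X - A \<in> M" "(X \<inter> A) \<inter> (X - A) = {}" using assms(2,3) by auto
  then have "mu ((X \<inter> A) \<union> (X - A)) = mu (X \<inter> A) + mu (X - A)"
    using assms(1) unfolding fin_add_def by blast
  moreover have "(X \<inter> A) \<union> (X - A) = X" by blast
  ultimately show ?thesis by simp
qed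

lemma fin_add_mono:
  assumes "fin_add M mu" "\<And>A. A \<in> M \<Longrightarrow> 0 \<le> mu A" "A \<in> M" "B \<in> M" "B \<subseteq> A"
  shows "mu B \<le> mu A"
  using fin_add_split[OF assms(1,3,4)] assms(2)[of "A - B"] assms(3-5) by (simp add: Int_absorb1 Diff)

lemma fin_add_le_space:
  "fin_add M mu \<Longrightarrow> (\<And>A. A \<in> M \<Longrightarrow> 0 \<le> mu A) \<Longrightarrow> A \<in> M \<Longrightarrow> mu A \<le> mu \<Omega>"
  using fin_add_mono[of mu \<Omega> A] sets_into_space by auto

lemma fin_add_lin:
  "fin_add M mu \<Longrightarrow> fin_add M nu \<Longrightarrow> fin_add M (\<lambda>A. a * mu A + b * nu A)"
  unfolding fin_add_def by (simp add: algebra_simps)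

lemma fin_add_sum:
  "finite I \<Longrightarrow> (\<And>i. i \<in> I \<Longrightarrow> fin_add M (F i)) \<Longrightarrow> fin_add M (\<lambda>A. \<Sum>i\<in>I. F i A)"
  unfolding fin_add_def by (simp add: sum.distrib)

lemma fin_add_restrict: "fin_add M nu \<Longrightarrow> B \<in> M \<Longrightarrow> fin_add M (\<lambda>E. nu (B \<inter> E))"
  unfolding fin_add_def
  by (auto simp: Int_Un_distrib) (metis Int Int_assoc Int_commute inf_bot_right Int_left_commute)

text \<open>A set function bounded by \<open>c\<close> has variation at most \<open>2c\<close> over any disjoint family:
  split the family according to the sign of the values.\<close>
lemma fin_add_abs_sum_le:
  assumes fa: "fin_add M mu" and c: "\<And>A. A \<in> M \<Longrightarrow> \<bar>mu A\<bar> \<le> c"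
    and P: "finite P" "P \<subseteq> M" "disjoint P"
  shows "(\<Sum>B\<in>P. \<bar>mu B\<bar>) \<le> 2 * c"
proof -
  let ?Pp = "{B\<in>P. 0 \<le> mu B}" and ?Pn = "{B\<in>P. mu B < 0}"
  have dj: "disjoint ?Pp" "disjoint ?Pn" using P(3) unfolding disjoint_def by auto
  have sub: "?Pp \<subseteq> M" "?Pn \<subseteq> M" "finite ?Pp" "finite ?Pn" using P(1,2) by auto
  have "(\<Sum>B\<in>P. \<bar>mu B\<bar>) = (\<Sum>B\<in>?Pp. \<bar>mu B\<bar>) + (\<Sum>B\<in>?Pn. \<bar>mu B\<bar>)"
    using P(1) by (subst sum.union_disjoint[symmetric]) (auto intro!: sum.cong)
  also have "\<dots> = mu (\<Union>?Pp) - mu (\<Union>?Pn)"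
    using fin_add_Union[OF fa sub(3,1) dj(1)] fin_add_Union[OF fa sub(4,2) dj(2)]
    by (simp add: sum_negf)
  also have "\<dots> \<le> 2 * c"
    using c[of "\<Union>?Pp"] c[of "\<Union>?Pn"] sub by (simp add: finite_Union abs_le_iff)
  finally show ?thesis .
qed

end

section \<open>Simple functions and their integral\<close>

context algebra
begin

definition finite_partition :: "'i set \<Rightarrow> ('i \<Rightarrow> 'a set) \<Rightarrow> bool" where
  "finite_partition I B \<longleftrightarrow> finite I \<and> (\<forall>i\<in>I. B i \<in> M) \<and> (\<Union>i\<in>I. B i) = \<Omega>
     \<and> disjoint_family_on B I"

lemma finite_partitionD:
  assumes "finite_partition I B"
  shows "finite I" "\<And>i. i \<in> I \<Longrightarrow> B i \<in> M" "(\<Union>i\<in>I. B i) = \<Omega>" "disjoint_family_on B I"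
  using assms unfolding finite_partition_def by auto

lemma simple_level: "simple_fn \<Omega> M f \<Longrightarrow> {x\<in>\<Omega>. f x = c} \<in> M"
  unfolding simple_fn_def by auto

lemma simple_finite: "simple_fn \<Omega> M f \<Longrightarrow> finite (f ` \<Omega>)"
  unfolding simple_fn_def by auto

lemma level_sets_partition:
  "simple_fn \<Omega> M f \<Longrightarrow> finite_partition (f ` \<Omega>) (\<lambda>c. {x\<in>\<Omega>. f x = c})"
  unfolding simple_fn_def finite_partition_def disjoint_family_on_def by auto

lemma simple_bounded:
  assumes "simple_fn \<Omega> M f"
  shows "\<exists>K. \<forall>x\<in>\<Omega>. \<bar>f x\<bar> \<le> K"
proof -
  have "\<bar>f x\<bar> \<le> (\<Sum>y\<in>f ` \<Omega>. \<bar>y\<bar>)" if "x \<in> \<Omega>" for x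
    using member_le_sum[of "f x" "f ` \<Omega>" abs] simple_finite[OF assms] that by auto
  then show ?thesis by blast
qed

lemma simple_fn_partition:
  assumes P: "finite_partition I B" and u: "\<And>i x. i \<in> I \<Longrightarrow> x \<in> B i \<Longrightarrow> u x = w i"
  shows "simple_fn \<Omega> M u"
proof -
  note P = finite_partitionD[OF P]
  have "u ` \<Omega> \<subseteq> w ` I" using P(3) u by auto
  then have "finite (u ` \<Omega>)" using P(1) finite_subset by blast
  moreover have "{x\<in>\<Omega>. u x = c} \<in> M" for c
  proof -
    have "{x\<in>\<Omega>. u x = c} = (\<Union>i\<in>{i\<in>I. w i = c}. B i)" using P(3) u by auto
    moreover have "(\<Union>i\<in>{i\<in>I. w i = c}. B i) \<in> M" using P(1,2) by (intro finite_UN) auto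
    ultimately show ?thesis by simp
  qed
  ultimately show ?thesis unfolding simple_fn_def by auto
qed

text \<open>The integral of a function constant on the cells of a partition: group the cells by
  their value.\<close>
lemma sint_partition:
  assumes fa: "fin_add M mu" and P: "finite_partition I B"
    and u: "\<And>i x. i \<in> I \<Longrightarrow> x \<in> B i \<Longrightarrow> u x = w i"
  shows "sint \<Omega> mu u = (\<Sum>i\<in>I. w i * mu (B i))"
proof -
  note P = finite_partitionD[OF P]
  let ?S = "{i\<in>I. B i \<noteq> {}}"
  have fS: "finite ?S" using P(1) by auto
  have "u ` \<Omega> \<subseteq> w ` I" using P(3) u by auto
  then have fT: "finite (u ` \<Omega>)" using P(1) finite_subset by blast
  have img: "w ` ?S \<subseteq> u ` \<Omega>" using P(3) u by force
  have level: "mu {x\<in>\<Omega>. u x = c} = (\<Sum>i\<in>{i\<in>?S. w i = c}. mu (B i))" for c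
  proof -
    have "{x\<in>\<Omega>. u x = c} = (\<Union>i\<in>{i\<in>I. w i = c}. B i)" using P(3) u by auto
    also have "mu \<dots> = (\<Sum>i\<in>{i\<in>I. w i = c}. mu (B i))"
      by (rule fin_add_UN[OF fa]) (use P in \<open>auto simp: disjoint_family_on_def\<close>)
    also have "\<dots> = (\<Sum>i\<in>{i\<in>?S. w i = c}. mu (B i))"
      by (rule sum.mono_neutral_right) (use P(1) fin_add_empty[OF fa] in auto)
    finally show ?thesis .
  qed
  have "sint \<Omega> mu u = (\<Sum>c\<in>u ` \<Omega>. (\<Sum>i\<in>{i\<in>?S. w i = c}. w i * mu (B i)))"
    unfolding sint_def level sum_distrib_left by (intro sum.cong) auto
  also have "\<dots> = (\<Sum>i\<in>?S. w i * mu (B i))"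
    using sum.group[OF fS fT img, of "\<lambda>i. w i * mu (B i)"] by simp
  also have "\<dots> = (\<Sum>i\<in>I. w i * mu (B i))"
    by (rule sum.mono_neutral_left) (use P(1) fin_add_empty[OF fa] in auto)
  finally show ?thesis .
qed

text \<open>The same computation for the restriction to a set \<open>E\<close>, using the partition refined
  by \<open>E\<close>.\<close>
lemma sint_partition_indicator:
  assumes fa: "fin_add M mu" and P: "finite_partition I B" and E: "E \<in> M"
    and u: "\<And>i x. i \<in> I \<Longrightarrow> x \<in> B i \<Longrightarrow> u x = w i"
  shows "sint \<Omega> mu (\<lambda>x. u x * indicator E x) = (\<Sum>i\<in>I. w i * mu (B i \<inter> E))"
proof -
  note Pd = finite_partitionD[OF P]
  define C where "C p = (if snd p then B (fst p) \<inter> E else B (fst p) - E)" for p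
  have "finite_partition (I \<times> UNIV) C"
    unfolding finite_partition_def
  proof (intro conjI ballI)
    show "finite (I \<times> (UNIV :: bool set))" using Pd(1) by simp
    show "C p \<in> M" if "p \<in> I \<times> UNIV" for p using that Pd(2) E unfolding C_def by auto
    show "(\<Union>p\<in>I \<times> UNIV. C p) = \<Omega>"
    proof
      show "(\<Union>p\<in>I \<times> UNIV. C p) \<subseteq> \<Omega>" using Pd(3) unfolding C_def by auto
      show "\<Omega> \<subseteq> (\<Union>p\<in>I \<times> UNIV. C p)"
      proof
        fix x assume "x \<in> \<Omega>"
        then obtain j where "j \<in> I" "x \<in> B j" using Pd(3) by auto
        then show "x \<in> (\<Union>p\<in>I \<times> UNIV. C p)" by (intro UN_I[of "(j, x \<in> E)"]) (auto simp: C_def)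
      qed
    qed
    show "disjoint_family_on C (I \<times> UNIV)"
      using Pd(4) unfolding disjoint_family_on_def C_def by (auto simp: prod_eq_iff)
  qed
  then have "sint \<Omega> mu (\<lambda>x. u x * indicator E x)
      = (\<Sum>p\<in>I \<times> UNIV. (if snd p then w (fst p) else 0) * mu (C p))"
    by (rule sint_partition[OF fa]) (use u in \<open>auto simp: C_def indicator_def split: if_splits\<close>)
  also have "\<dots> = (\<Sum>i\<in>I. \<Sum>b\<in>UNIV. (if b then w i else 0) * mu (C (i, b)))"
    by (simp add: sum.cartesian_product split_def)
  also have "\<dots> = (\<Sum>i\<in>I. w i * mu (B i \<inter> E))"
    by (intro sum.cong) (auto simp: UNIV_bool C_def)
  finally show ?thesis .
qed

definition cell :: "('a \<Rightarrow> real) \<Rightarrow> ('a \<Rightarrow> real) \<Rightarrow> real \<times> real \<Rightarrow> 'a set" where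
  "cell f g p = {x\<in>\<Omega>. f x = fst p \<and> g x = snd p}"

lemma cell_in_algebra:
  assumes "simple_fn \<Omega> M f" "simple_fn \<Omega> M g"
  shows "cell f g p \<in> M"
proof -
  have "cell f g p = {x\<in>\<Omega>. f x = fst p} \<inter> {x\<in>\<Omega>. g x = snd p}" unfolding cell_def by auto
  then show ?thesis using simple_level[OF assms(1)] simple_level[OF assms(2)] by auto
qed

lemma cell_partition:
  assumes "simple_fn \<Omega> M f" "simple_fn \<Omega> M g"
  shows "finite_partition (f ` \<Omega> \<times> g ` \<Omega>) (cell f g)"
  using assms cell_in_algebra[OF assms] unfolding finite_partition_def
  by (auto simp: simple_fn_def disjoint_family_on_def cell_def prod_eq_iff)

lemma simple_comb:
  assumes "simple_fn \<Omega> M f" "simple_fn \<Omega> M g"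
  shows "simple_fn \<Omega> M (\<lambda>x. F (f x) (g x))"
  by (rule simple_fn_partition[OF cell_partition[OF assms], where w="\<lambda>p. F (fst p) (snd p)"])
    (auto simp: cell_def)

lemma sint_comb:
  assumes "fin_add M mu" "simple_fn \<Omega> M f" "simple_fn \<Omega> M g"
  shows "sint \<Omega> mu (\<lambda>x. F (f x) (g x))
    = (\<Sum>p\<in>f ` \<Omega> \<times> g ` \<Omega>. F (fst p) (snd p) * mu (cell f g p))"
  by (rule sint_partition[OF assms(1) cell_partition[OF assms(2,3)]]) (auto simp: cell_def)

lemma trivial_partition: "finite_partition {()} (\<lambda>_. \<Omega>)"
  unfolding finite_partition_def by (auto simp: disjoint_family_on_def)

lemma simple_const: "simple_fn \<Omega> M (\<lambda>x. K)"
  by (rule simple_fn_partition[OF trivial_partition]) auto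

lemma simple_indicator:
  assumes "A \<in> M"
  shows "simple_fn \<Omega> M (indicator A :: 'a \<Rightarrow> real)"
proof -
  have "finite_partition UNIV (\<lambda>b. if b then A else \<Omega> - A)"
    using assms sets_into_space[OF assms]
    unfolding finite_partition_def disjoint_family_on_def by (auto simp: UNIV_bool)
  then show ?thesis by (rule simple_fn_partition[where w="\<lambda>b. if b then 1 else 0"]) auto
qed

lemma simple_map: "simple_fn \<Omega> M f \<Longrightarrow> simple_fn \<Omega> M (\<lambda>x. F (f x))"
  using simple_comb[OF _ simple_const, of f "\<lambda>a b. F a" 0] by simp

lemma sint_add:
  assumes "fin_add M mu" "simple_fn \<Omega> M f" "simple_fn \<Omega> M g"
  shows "sint \<Omega> mu (\<lambda>x. f x + g x) = sint \<Omega> mu f + sint \<Omega> mu g"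
  using sint_comb[OF assms, of "(+)"] sint_comb[OF assms, of "\<lambda>a b. a"]
    sint_comb[OF assms, of "\<lambda>a b. b"]
  by (simp add: distrib_right sum.distrib)

lemma sint_diff:
  assumes "fin_add M mu" "simple_fn \<Omega> M f" "simple_fn \<Omega> M g"
  shows "sint \<Omega> mu (\<lambda>x. f x - g x) = sint \<Omega> mu f - sint \<Omega> mu g"
  using sint_comb[OF assms, of "(-)"] sint_comb[OF assms, of "\<lambda>a b. a"]
    sint_comb[OF assms, of "\<lambda>a b. b"]
  by (simp add: left_diff_distrib sum_subtractf)

lemma sint_cmult:
  assumes "fin_add M mu" "simple_fn \<Omega> M f"
  shows "sint \<Omega> mu (\<lambda>x. c * f x) = c * sint \<Omega> mu f"
  using sint_comb[OF assms assms(2), of "\<lambda>a b. c * a"] sint_comb[OF assms assms(2), of "\<lambda>a b. a"]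
  by (simp add: sum_distrib_left mult.assoc)

text \<open>Monotonicity for nonnegative set functions: compare cell by cell.\<close>
lemma sint_mono:
  assumes fa: "fin_add M mu" and nn: "\<And>A. A \<in> M \<Longrightarrow> 0 \<le> mu A"
    and fg: "simple_fn \<Omega> M f" "simple_fn \<Omega> M g" and le: "\<And>x. x \<in> \<Omega> \<Longrightarrow> f x \<le> g x"
  shows "sint \<Omega> mu f \<le> sint \<Omega> mu g"
proof -
  have "fst p * mu (cell f g p) \<le> snd p * mu (cell f g p)" for p
  proof (cases "cell f g p = {}")
    case True
    then show ?thesis using fin_add_empty[OF fa] by simp
  next
    case False
    then obtain x where "x \<in> \<Omega>" "f x = fst p" "g x = snd p" unfolding cell_def by auto
    then have "fst p \<le> snd p" using le by force
    then show ?thesis using nn[OF cell_in_algebra[OF fg]] by (simp add: mult_right_mono)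
  qed
  then show ?thesis
    using sint_comb[OF fa fg, of "\<lambda>a b. a"] sint_comb[OF fa fg, of "\<lambda>a b. b"]
    by (simp add: sum_mono)
qed

lemma sint_const: "fin_add M mu \<Longrightarrow> sint \<Omega> mu (\<lambda>x. K) = K * mu \<Omega>"
  using sint_partition[OF _ trivial_partition, of mu "\<lambda>x. K" "\<lambda>_. K"] by simp

lemma sint_indicator_mult:
  assumes "fin_add M mu" "simple_fn \<Omega> M f" "E \<in> M"
  shows "sint \<Omega> mu (\<lambda>x. f x * indicator E x) = (\<Sum>c\<in>f ` \<Omega>. c * mu ({x\<in>\<Omega>. f x = c} \<inter> E))"
  by (rule sint_partition_indicator[OF assms(1) level_sets_partition[OF assms(2)] assms(3)]) auto

lemma sint_indicator: "fin_add M mu \<Longrightarrow> A \<in> M \<Longrightarrow> sint \<Omega> mu (indicator A) = mu A"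
  using sint_partition_indicator[OF _ trivial_partition, of mu A "\<lambda>_. 1" "\<lambda>_. 1"]
    sets_into_space by (simp add: Int_absorb1)

lemma sint_abs_le:
  assumes "fin_add M mu" "fin_add M nu" "\<And>A. A \<in> M \<Longrightarrow> \<bar>mu A\<bar> \<le> nu A" "simple_fn \<Omega> M f"
  shows "\<bar>sint \<Omega> mu f\<bar> \<le> sint \<Omega> nu (\<lambda>x. \<bar>f x\<bar>)"
proof -
  have "\<bar>sint \<Omega> mu f\<bar> \<le> (\<Sum>c\<in>f ` \<Omega>. \<bar>c * mu {x\<in>\<Omega>. f x = c}\<bar>)"
    unfolding sint_def by (rule sum_abs)
  also have "\<dots> \<le> (\<Sum>c\<in>f ` \<Omega>. \<bar>c\<bar> * nu {x\<in>\<Omega>. f x = c})"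
    using assms(3)[OF simple_level[OF assms(4)]] by (intro sum_mono) (simp add: abs_mult mult_left_mono)
  also have "\<dots> = sint \<Omega> nu (\<lambda>x. \<bar>f x\<bar>)"
    by (rule sint_partition[OF assms(2) level_sets_partition[OF assms(4)], symmetric]) auto
  finally show ?thesis .
qed

lemma simple_superlevel:
  assumes "simple_fn \<Omega> M s"
  shows "{x\<in>\<Omega>. P (s x)} \<in> M"
proof -
  have "{x\<in>\<Omega>. P (s x)} = (\<Union>v\<in>{v\<in>s ` \<Omega>. P v}. {x\<in>\<Omega>. s x = v})" by auto
  also have "\<dots> \<in> M" using simple_finite[OF assms] simple_level[OF assms] by (intro finite_UN) auto
  finally show ?thesis .
qed

lemma fin_add_sint_indicator:
  assumes fa: "fin_add M nu" and d: "simple_fn \<Omega> M d"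
  shows "fin_add M (\<lambda>E. sint \<Omega> nu (\<lambda>x. d x * indicator E x))"
  unfolding fin_add_def
proof (intro ballI impI)
  fix A B assume AB: "A \<in> M" "B \<in> M" "A \<inter> B = {}"
  then have "(\<lambda>x. d x * indicator (A \<union> B) x) = (\<lambda>x. d x * indicator A x + d x * indicator B x)"
    by (auto simp: indicator_def fun_eq_iff)
  then show "sint \<Omega> nu (\<lambda>x. d x * indicator (A \<union> B) x) =
    sint \<Omega> nu (\<lambda>x. d x * indicator A x) + sint \<Omega> nu (\<lambda>x. d x * indicator B x)"
    using sint_add[OF fa simple_comb[OF d simple_indicator[OF AB(1)]]
        simple_comb[OF d simple_indicator[OF AB(2)]]] by simp
qed

text \<open>The \<open>L\<^sup>1\<close>-norm of a simple function is at most twice the supremum of its integrals over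
  sets of the algebra: the integral of \<open>|d|\<close> is the variation of \<open>E \<mapsto> \<integral>\<^sub>E d\<close> over the level
  sets of \<open>d\<close>.\<close>
lemma sint_abs_le_twice_sup:
  assumes fa: "fin_add M nu" and nn: "\<And>A. A \<in> M \<Longrightarrow> 0 \<le> nu A" and d: "simple_fn \<Omega> M d"
    and bnd: "\<And>E. E \<in> M \<Longrightarrow> \<bar>sint \<Omega> nu (\<lambda>x. d x * indicator E x)\<bar> \<le> K"
  shows "sint \<Omega> nu (\<lambda>x. \<bar>d x\<bar>) \<le> 2 * K"
proof -
  define D where "D E = sint \<Omega> nu (\<lambda>x. d x * indicator E x)" for E
  define Lv where "Lv v = {x\<in>\<Omega>. d x = v}" for v
  have LvM: "Lv v \<in> M" for v unfolding Lv_def by (rule simple_level[OF d])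
  have faD: "fin_add M D" unfolding D_def by (rule fin_add_sint_indicator[OF fa d])
  have level: "\<bar>v\<bar> * nu (Lv v) = \<bar>D (Lv v)\<bar>" if v: "v \<in> d ` \<Omega>" for v
  proof -
    have "D (Lv v) = (\<Sum>w\<in>d ` \<Omega>. w * nu ({x\<in>\<Omega>. d x = w} \<inter> Lv v))"
      unfolding D_def by (rule sint_indicator_mult[OF fa d LvM])
    also have "\<dots> = (\<Sum>w\<in>d ` \<Omega>. if w = v then v * nu (Lv v) else 0)"
    proof (rule sum.cong[OF refl])
      fix w
      have "{x\<in>\<Omega>. d x = w} \<inter> Lv v = (if w = v then Lv v else {})" by (auto simp: Lv_def)
      then show "w * nu ({x\<in>\<Omega>. d x = w} \<inter> Lv v) = (if w = v then v * nu (Lv v) else 0)"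
        by (simp add: fin_add_empty[OF fa])
    qed
    also have "\<dots> = v * nu (Lv v)" using v simple_finite[OF d] by simp
    finally show ?thesis using nn[OF LvM] by (simp add: abs_mult)
  qed
  have "sint \<Omega> nu (\<lambda>x. \<bar>d x\<bar>) = (\<Sum>v\<in>d ` \<Omega>. \<bar>v\<bar> * nu (Lv v))"
    unfolding Lv_def by (rule sint_partition[OF fa level_sets_partition[OF d]]) auto
  also have "\<dots> = (\<Sum>C\<in>Lv ` d ` \<Omega>. \<bar>D C\<bar>)"
    using level by (subst sum.reindex) (auto simp: inj_on_def Lv_def)
  also have "\<dots> \<le> 2 * K"
    by (rule fin_add_abs_sum_le[OF faD])
      (use bnd simple_finite[OF d] LvM in \<open>auto simp: D_def Lv_def disjoint_def\<close>)
  finally show ?thesis .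
qed

definition step_fn :: "'i set \<Rightarrow> ('i \<Rightarrow> real) \<Rightarrow> ('i \<Rightarrow> 'a set) \<Rightarrow> 'a \<Rightarrow> real" where
  "step_fn I r B x = (\<Sum>i\<in>I. r i * indicator (B i) x)"

lemma step_fn_value:
  assumes P: "finite_partition I B" and "j \<in> I" "x \<in> B j"
  shows "step_fn I r B x = r j"
proof -
  have "step_fn I r B x = (\<Sum>i\<in>I. if i = j then r j else 0)"
    unfolding step_fn_def using finite_partitionD(4)[OF P] assms(2,3)
    by (intro sum.cong) (auto simp: disjoint_family_on_def indicator_def)
  also have "\<dots> = r j" using assms(2) finite_partitionD(1)[OF P] by simp
  finally show ?thesis .
qed

lemma step_fn_range:
  assumes P: "finite_partition I B" and x: "x \<in> \<Omega>"
  shows "\<exists>j\<in>I. step_fn I r B x = r j"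
  using finite_partitionD(3)[OF P] x step_fn_value[OF P] by blast

lemma simple_step_fn: "finite_partition I B \<Longrightarrow> simple_fn \<Omega> M (step_fn I r B)"
  by (rule simple_fn_partition) (auto intro: step_fn_value)

lemma sint_step_fn_indicator:
  "fin_add M nu \<Longrightarrow> finite_partition I B \<Longrightarrow> E \<in> M
    \<Longrightarrow> sint \<Omega> nu (\<lambda>x. step_fn I r B x * indicator E x) = (\<Sum>i\<in>I. r i * nu (B i \<inter> E))"
  by (rule sint_partition_indicator) (auto intro: step_fn_value)

end

section \<open>Total variation\<close>

definition admissible :: "'a set set \<Rightarrow> 'a set \<Rightarrow> 'a set set \<Rightarrow> bool" where
  "admissible M A P \<longleftrightarrow> finite P \<and> P \<subseteq> M \<and> disjoint P \<and> \<Union>P \<subseteq> A"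

definition psup :: "'a set set \<Rightarrow> ('a set \<Rightarrow> real) \<Rightarrow> 'a set \<Rightarrow> real" where
  "psup M phi A = Sup {(\<Sum>B\<in>P. phi B) | P. admissible M A P}"

lemma tv_psup: "tv M mu A = psup M (\<lambda>B. \<bar>mu B\<bar>) A"
  unfolding tv_def psup_def admissible_def by simp

text \<open>For a nonnegative, subadditive set function whose sums over disjoint families are
  bounded, \<open>psup\<close> is a finitely additive set function dominating it.\<close>
locale bounded_subadditive = algebra +
  fixes phi :: "'a set \<Rightarrow> real" and K :: real
  assumes phi_nonneg: "\<And>A. A \<in> M \<Longrightarrow> 0 \<le> phi A"
    and phi_empty: "phi {} = 0"
    and phi_subadd: "\<And>A B. A \<in> M \<Longrightarrow> B \<in> M \<Longrightarrow> A \<inter> B = {} \<Longrightarrow> phi (A \<union> B) \<le> phi A + phi B"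
    and phi_bounded: "\<And>P. admissible M \<Omega> P \<Longrightarrow> (\<Sum>B\<in>P. phi B) \<le> K"
begin

lemma psup_upper:
  assumes "A \<in> M" "admissible M A P"
  shows "(\<Sum>B\<in>P. phi B) \<le> psup M phi A"
proof -
  have "admissible M A Q \<Longrightarrow> admissible M \<Omega> Q" for Q
    using sets_into_space[OF assms(1)] unfolding admissible_def by auto
  then have bdd: "bdd_above {(\<Sum>B\<in>P. phi B) | P. admissible M A P}"
    unfolding bdd_above_def using phi_bounded by blast
  show ?thesis unfolding psup_def by (rule cSup_upper[OF _ bdd]) (use assms(2) in auto)
qed

lemma psup_least: "(\<And>P. admissible M A P \<Longrightarrow> (\<Sum>B\<in>P. phi B) \<le> y) \<Longrightarrow> psup M phi A \<le> y"
  unfolding psup_def by (rule cSup_least) (auto simp: admissible_def intro!: exI[of _ "{}"])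

lemma psup_ge: "A \<in> M \<Longrightarrow> phi A \<le> psup M phi A"
  using psup_upper[of A "{A}"] unfolding admissible_def by auto

lemma psup_nonneg: "A \<in> M \<Longrightarrow> 0 \<le> psup M phi A"
  using psup_upper[of A "{}"] unfolding admissible_def by auto

lemma psup_le_bound: "psup M phi A \<le> K"
  by (rule psup_least) (use phi_bounded sets_into_space in \<open>auto simp: admissible_def\<close>)

text \<open>Intersecting an admissible family for \<open>A\<close> with \<open>B\<close> gives an admissible family for
  \<open>A \<inter> B\<close>; coinciding intersections are empty and contribute nothing.\<close>
lemma sum_restrict_le_psup:
  assumes "admissible M A P" "A \<in> M" "B \<in> M"
  shows "(\<Sum>C\<in>P. phi (C \<inter> B)) \<le> psup M phi (A \<inter> B)"
proof -
  have fin: "finite P" and PM: "P \<subseteq> M" and dj: "disjoint P" and sub: "\<Union>P \<subseteq> A"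
    using assms(1) unfolding admissible_def by auto
  have "(\<Sum>D\<in>(\<lambda>C. C \<inter> B) ` P. phi D) = (\<Sum>C\<in>P. (phi \<circ> (\<lambda>C. C \<inter> B)) C)"
  proof (rule sum.reindex_nontrivial[OF fin])
    fix x y assume "x \<in> P" "y \<in> P" "x \<noteq> y" "x \<inter> B = y \<inter> B"
    then have "x \<inter> B = {}" using dj unfolding disjoint_def by blast
    then show "phi (x \<inter> B) = 0" using phi_empty by simp
  qed
  moreover have "admissible M (A \<inter> B) ((\<lambda>C. C \<inter> B) ` P)"
    using fin PM dj sub assms(3) unfolding admissible_def disjoint_def by auto
  ultimately show ?thesis using psup_upper assms(2,3) by (metis Int comp_apply sum.cong)
qed

lemma psup_subadd:
  assumes A: "A \<in> M" and B: "B \<in> M" and AB: "A \<inter> B = {}"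
  shows "psup M phi (A \<union> B) \<le> psup M phi A + psup M phi B"
proof (rule psup_least)
  fix P assume P: "admissible M (A \<union> B) P"
  have AuB: "A \<union> B \<in> M" using A B by auto
  have eq: "(A \<union> B) \<inter> A = A" "(A \<union> B) \<inter> B = B" using AB by auto
  have "(\<Sum>C\<in>P. phi C) \<le> (\<Sum>C\<in>P. phi (C \<inter> A) + phi (C \<inter> B))"
  proof (rule sum_mono)
    fix C assume "C \<in> P"
    then have C: "C \<in> M" "C = (C \<inter> A) \<union> (C \<inter> B)" using P unfolding admissible_def by auto
    show "phi C \<le> phi (C \<inter> A) + phi (C \<inter> B)"
      using phi_subadd[of "C \<inter> A" "C \<inter> B"] C A B AB by auto
  qed
  also have "\<dots> \<le> psup M phi A + psup M phi B"
    unfolding sum.distrib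
    using sum_restrict_le_psup[OF P AuB A] sum_restrict_le_psup[OF P AuB B] eq by simp
  finally show "(\<Sum>C\<in>P. phi C) \<le> psup M phi A + psup M phi B" .
qed

lemma admissible_union_sum:
  assumes P: "admissible M A P" and Q: "admissible M B Q" and AB: "A \<inter> B = {}"
    and AuB: "A \<union> B \<in> M"
  shows "(\<Sum>C\<in>P. phi C) + (\<Sum>C\<in>Q. phi C) \<le> psup M phi (A \<union> B)"
proof -
  have PA: "\<And>C. C \<in> P \<Longrightarrow> C \<subseteq> A" and QB: "\<And>C. C \<in> Q \<Longrightarrow> C \<subseteq> B"
    and dP: "disjoint P" and dQ: "disjoint Q" using P Q unfolding admissible_def by auto
  have "disjoint (P \<union> Q)"
    unfolding disjoint_def
  proof (intro ballI impI)
    fix a b assume "a \<in> P \<union> Q" "b \<in> P \<union> Q" "a \<noteq> b"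
    then show "a \<inter> b = {}"
      using PA[of a] PA[of b] QB[of a] QB[of b] AB dP dQ unfolding disjoint_def
      by (cases "a \<in> P"; cases "b \<in> P") auto
  qed
  then have PQ: "admissible M (A \<union> B) (P \<union> Q)"
    using P Q unfolding admissible_def by auto
  have "P \<inter> Q \<subseteq> {{}}" using PA QB AB by blast
  then have "(\<Sum>C\<in>P \<inter> Q. phi C) = 0"
    by (metis (no_types, lifting) phi_empty singleton_iff subset_iff sum.neutral)
  then have "(\<Sum>C\<in>P. phi C) + (\<Sum>C\<in>Q. phi C) = (\<Sum>C\<in>P \<union> Q. phi C)"
    using P Q sum.union_inter[of P Q phi] unfolding admissible_def by simp
  also have "\<dots> \<le> psup M phi (A \<union> B)" by (rule psup_upper[OF AuB PQ])
  finally show ?thesis .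
qed

lemma psup_superadd:
  assumes A: "A \<in> M" and B: "B \<in> M" and AB: "A \<inter> B = {}"
  shows "psup M phi A + psup M phi B \<le> psup M phi (A \<union> B)"
proof -
  have AuB: "A \<union> B \<in> M" using A B by auto
  have "psup M phi A \<le> psup M phi (A \<union> B) - (\<Sum>C\<in>Q. phi C)" if Q: "admissible M B Q" for Q
    by (rule psup_least) (use admissible_union_sum[OF _ Q AB AuB] in force)
  then have "(\<Sum>C\<in>Q. phi C) \<le> psup M phi (A \<union> B) - psup M phi A" if "admissible M B Q" for Q
    using that by fastforce
  then have "psup M phi B \<le> psup M phi (A \<union> B) - psup M phi A"
    by (rule psup_least)
  then show ?thesis by simp
qed

lemma psup_fin_add: "fin_add M (psup M phi)"
  unfolding fin_add_def using psup_subadd psup_superadd by (simp add: antisym)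

end

context algebra
begin

lemma ba_fin_add: "mu \<in> ba M \<Longrightarrow> fin_add M mu"
  unfolding ba_def by auto

lemma tv_bounded_subadditive:
  assumes "mu \<in> ba M"
  shows "\<exists>K. bounded_subadditive \<Omega> M (\<lambda>B. \<bar>mu B\<bar>) K"
proof -
  obtain c where c: "\<And>A. A \<in> M \<Longrightarrow> \<bar>mu A\<bar> \<le> c" using assms unfolding ba_def by auto
  have fa: "fin_add M mu" using ba_fin_add[OF assms] .
  have "bounded_subadditive \<Omega> M (\<lambda>B. \<bar>mu B\<bar>) (2 * c)"
  proof unfold_locales
    show "\<bar>mu {}\<bar> = 0" using fin_add_empty[OF fa] by simp
    show "\<bar>mu (A \<union> B)\<bar> \<le> \<bar>mu A\<bar> + \<bar>mu B\<bar>" if "A \<in> M" "B \<in> M" "A \<inter> B = {}" for A B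
      using fa that unfolding fin_add_def by auto
    show "(\<Sum>B\<in>P. \<bar>mu B\<bar>) \<le> 2 * c" if "admissible M \<Omega> P" for P
      using fin_add_abs_sum_le[OF fa c] that unfolding admissible_def by auto
  qed auto
  then show ?thesis by blast
qed

lemma tv_fin_add: "mu \<in> ba M \<Longrightarrow> fin_add M (tv M mu)"
  using tv_bounded_subadditive bounded_subadditive.psup_fin_add unfolding tv_psup[abs_def] by metis

lemma tv_nonneg: "mu \<in> ba M \<Longrightarrow> A \<in> M \<Longrightarrow> 0 \<le> tv M mu A"
  using tv_bounded_subadditive bounded_subadditive.psup_nonneg unfolding tv_psup by metis

lemma tv_ge_abs: "mu \<in> ba M \<Longrightarrow> A \<in> M \<Longrightarrow> \<bar>mu A\<bar> \<le> tv M mu A"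
  using tv_bounded_subadditive bounded_subadditive.psup_ge unfolding tv_psup by metis

lemma tv_ba: assumes "mu \<in> ba M" shows "tv M mu \<in> ba M"
proof -
  obtain K where "bounded_subadditive \<Omega> M (\<lambda>B. \<bar>mu B\<bar>) K"
    using tv_bounded_subadditive[OF assms] by auto
  then have "\<forall>A\<in>M. \<bar>tv M mu A\<bar> \<le> K"
    using bounded_subadditive.psup_le_bound tv_nonneg[OF assms] unfolding tv_psup by fastforce
  then show ?thesis unfolding ba_def using tv_fin_add[OF assms] by auto
qed

end

section \<open>The integral of uniform limits of simple functions\<close>

lemma fraction_lt: fixes e T :: real assumes "e > 0" "T \<ge> 0" shows "T * (e / (T + 1)) < e"
proof -
  have "T * (e / (T + 1)) = e * (T / (T + 1))" by simp
  also have "T / (T + 1) < 1" using assms by simp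
  then have "e * (T / (T + 1)) < e * 1" using assms by (intro mult_strict_left_mono) auto
  finally show ?thesis by simp
qed

lemma eventually_inverse_Suc_less: "(r::real) > 0 \<Longrightarrow> \<exists>N. \<forall>n\<ge>N. inverse (real (Suc n)) < r"
  using LIMSEQ_D[OF LIMSEQ_inverse_real_of_nat, of r] by auto

lemma le_by_scaled_epsilon:
  fixes x y C :: real
  assumes "\<And>e. e > 0 \<Longrightarrow> x \<le> y + e * C"
  shows "x \<le> y"
proof (rule field_le_epsilon)
  fix e :: real assume e: "e > 0"
  have p: "e / (\<bar>C\<bar> + 1) > 0" using e by (simp add: add_nonneg_pos)
  have "(e / (\<bar>C\<bar> + 1)) * C \<le> (e / (\<bar>C\<bar> + 1)) * \<bar>C\<bar>" using e by (intro mult_left_mono) auto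
  also have "\<dots> \<le> e" using e by (simp add: field_simps)
  finally show "x \<le> y + e" using assms[OF p] by simp
qed

lemma abs_lincomb_diff_le:
  fixes a b u v s t :: real
  shows "\<bar>a * u + b * v - (a * s + b * t)\<bar> \<le> \<bar>a\<bar> * \<bar>u - s\<bar> + \<bar>b\<bar> * \<bar>v - t\<bar>"
  by (simp add: abs_mult[symmetric] right_diff_distrib[symmetric]
      abs_triangle_ineq[THEN order_trans] add_diff_add)

context algebra
begin

definition approx_seq :: "('a \<Rightarrow> real) \<Rightarrow> (nat \<Rightarrow> 'a \<Rightarrow> real) \<Rightarrow> bool" where
  "approx_seq h s \<longleftrightarrow> (\<forall>n. simple_fn \<Omega> M (s n))
     \<and> (\<forall>\<epsilon>>0. \<exists>N. \<forall>n\<ge>N. \<forall>x\<in>\<Omega>. \<bar>h x - s n x\<bar> \<le> \<epsilon>)"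

lemma fa_int_approx_seq:
  "fa_int \<Omega> M mu h = (THE l. \<forall>s. approx_seq h s \<longrightarrow> (\<lambda>n. sint \<Omega> mu (s n)) \<longlonglongrightarrow> l)"
  unfolding fa_int_def approx_seq_def ..

lemma tv_space_nonneg: "mu \<in> ba M \<Longrightarrow> 0 \<le> tv M mu \<Omega>"
  using tv_nonneg by auto

lemma sint_bound:
  assumes "mu \<in> ba M" "simple_fn \<Omega> M s" "\<And>x. x \<in> \<Omega> \<Longrightarrow> \<bar>s x\<bar> \<le> K"
  shows "\<bar>sint \<Omega> mu s\<bar> \<le> K * tv M mu \<Omega>"
proof -
  note tv = tv_fin_add[OF assms(1)] tv_nonneg[OF assms(1)]
  have "\<bar>sint \<Omega> mu s\<bar> \<le> sint \<Omega> (tv M mu) (\<lambda>x. \<bar>s x\<bar>)"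
    by (rule sint_abs_le[OF ba_fin_add[OF assms(1)] tv(1) tv_ge_abs[OF assms(1)] assms(2)])
  also have "\<dots> \<le> sint \<Omega> (tv M mu) (\<lambda>x. K)"
    by (rule sint_mono[OF tv simple_map[OF assms(2)] simple_const]) (use assms(3) in auto)
  also have "\<dots> = K * tv M mu \<Omega>" by (rule sint_const[OF tv(1)])
  finally show ?thesis .
qed

lemma sint_close:
  assumes "mu \<in> ba M" "simple_fn \<Omega> M s" "simple_fn \<Omega> M t"
    "\<And>x. x \<in> \<Omega> \<Longrightarrow> \<bar>s x - t x\<bar> \<le> K"
  shows "\<bar>sint \<Omega> mu s - sint \<Omega> mu t\<bar> \<le> K * tv M mu \<Omega>"
  using sint_bound[OF assms(1) simple_comb[OF assms(2,3), of "(-)"] assms(4)]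
    sint_diff[OF ba_fin_add[OF assms(1)] assms(2,3)] by simp

lemma bfun_approx_seq:
  assumes "bfun \<Omega> M h"
  shows "\<exists>t. approx_seq h t \<and> (\<forall>n. \<forall>x\<in>\<Omega>. \<bar>h x - t n x\<bar> \<le> inverse (real (Suc n)))"
proof -
  have "\<forall>n. \<exists>t. simple_fn \<Omega> M t \<and> (\<forall>x\<in>\<Omega>. \<bar>h x - t x\<bar> < inverse (real (Suc n)))"
    using assms unfolding bfun_def by auto
  then obtain t where t: "\<And>n. simple_fn \<Omega> M (t n)"
    "\<And>n x. x \<in> \<Omega> \<Longrightarrow> \<bar>h x - t n x\<bar> < inverse (real (Suc n))"
    by metis
  have "approx_seq h t"
    unfolding approx_seq_def
  proof (intro conjI allI impI)
    show "simple_fn \<Omega> M (t n)" for n by (rule t(1))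
    fix e :: real assume "e > 0"
    then obtain N where "\<forall>n\<ge>N. inverse (real (Suc n)) < e" using eventually_inverse_Suc_less by blast
    then show "\<exists>N. \<forall>n\<ge>N. \<forall>x\<in>\<Omega>. \<bar>h x - t n x\<bar> \<le> e" using t(2) by (meson less_imp_le less_trans)
  qed
  then show ?thesis using t(2) less_imp_le by blast
qed

text \<open>Integrals of two uniform approximations of the same function are eventually close;
  this gives both the Cauchy property and the independence of the limit.\<close>
lemma approx_seq_sint_close:
  assumes mu: "mu \<in> ba M" and s: "approx_seq h s" and t: "approx_seq h t" and r: "r > 0"
  shows "\<exists>N. \<forall>m\<ge>N. \<forall>n\<ge>N. \<bar>sint \<Omega> mu (s m) - sint \<Omega> mu (t n)\<bar> < r"
proof -
  define T where "T = tv M mu \<Omega>"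
  have T: "0 \<le> T" unfolding T_def by (rule tv_space_nonneg[OF mu])
  define q where "q = r / (2 * (T + 1))"
  have q: "q > 0" unfolding q_def using r T by (simp add: add_nonneg_pos)
  obtain N1 where N1: "\<forall>n\<ge>N1. \<forall>x\<in>\<Omega>. \<bar>h x - s n x\<bar> \<le> q" using s q unfolding approx_seq_def by blast
  obtain N2 where N2: "\<forall>n\<ge>N2. \<forall>x\<in>\<Omega>. \<bar>h x - t n x\<bar> \<le> q" using t q unfolding approx_seq_def by blast
  have "\<bar>sint \<Omega> mu (s m) - sint \<Omega> mu (t n)\<bar> < r" if "m \<ge> max N1 N2" "n \<ge> max N1 N2" for m n
  proof -
    have "\<bar>sint \<Omega> mu (s m) - sint \<Omega> mu (t n)\<bar> \<le> (2 * q) * T"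
    proof (rule sint_close[OF mu _ _, folded T_def])
      show "simple_fn \<Omega> M (s m)" "simple_fn \<Omega> M (t n)" using s t unfolding approx_seq_def by auto
      fix x assume x: "x \<in> \<Omega>"
      have "\<bar>h x - s m x\<bar> \<le> q" "\<bar>h x - t n x\<bar> \<le> q" using N1 N2 that x by auto
      moreover have "\<bar>s m x - t n x\<bar> \<le> \<bar>h x - s m x\<bar> + \<bar>h x - t n x\<bar>" by simp
      ultimately show "\<bar>s m x - t n x\<bar> \<le> 2 * q" by linarith
    qed
    also have "\<dots> = T * (r / (T + 1))" unfolding q_def using T by (simp add: field_simps)
    also have "\<dots> < r" by (rule fraction_lt[OF r T])
    finally show ?thesis .
  qed
  then show ?thesis by blast
qed

lemma fa_int_tendsto:
  assumes mu: "mu \<in> ba M" and h: "bfun \<Omega> M h"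
  shows "\<forall>s. approx_seq h s \<longrightarrow> (\<lambda>n. sint \<Omega> mu (s n)) \<longlonglongrightarrow> fa_int \<Omega> M mu h"
proof -
  obtain t where t: "approx_seq h t" using bfun_approx_seq[OF h] by auto
  have "Cauchy (\<lambda>n. sint \<Omega> mu (t n))"
  proof (rule CauchyI)
    fix r :: real assume "r > 0"
    then obtain N where N: "\<forall>m\<ge>N. \<forall>n\<ge>N. \<bar>sint \<Omega> mu (t m) - sint \<Omega> mu (t n)\<bar> < r"
      using approx_seq_sint_close[OF mu t t] by presburger
    show "\<exists>N. \<forall>m\<ge>N. \<forall>n\<ge>N. norm (sint \<Omega> mu (t m) - sint \<Omega> mu (t n)) < r"
      using N by (intro exI[of _ N]) simp
  qed
  then obtain l where l: "(\<lambda>n. sint \<Omega> mu (t n)) \<longlonglongrightarrow> l"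
    using Cauchy_convergent_iff convergent_def by blast
  have all: "(\<lambda>n. sint \<Omega> mu (s n)) \<longlonglongrightarrow> l" if s: "approx_seq h s" for s
  proof (rule Lim_transform[OF l], rule LIMSEQ_I)
    fix r :: real assume "r > 0"
    then obtain N where N: "\<forall>m\<ge>N. \<forall>n\<ge>N. \<bar>sint \<Omega> mu (s m) - sint \<Omega> mu (t n)\<bar> < r"
      using approx_seq_sint_close[OF mu s t] by presburger
    have "norm (sint \<Omega> mu (s n) - sint \<Omega> mu (t n) - 0) < r" if "n \<ge> N" for n
      using N that by simp
    then show "\<exists>N. \<forall>n\<ge>N. norm (sint \<Omega> mu (s n) - sint \<Omega> mu (t n) - 0) < r" by blast
  qed
  have "fa_int \<Omega> M mu h = l"
    unfolding fa_int_approx_seq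
  proof (rule the_equality)
    show "\<forall>s. approx_seq h s \<longrightarrow> (\<lambda>n. sint \<Omega> mu (s n)) \<longlonglongrightarrow> l"
      by (intro allI impI all)
  next
    fix l' assume "\<forall>s. approx_seq h s \<longrightarrow> (\<lambda>n. sint \<Omega> mu (s n)) \<longlonglongrightarrow> l'"
    then have "(\<lambda>n. sint \<Omega> mu (t n)) \<longlonglongrightarrow> l'" using t by blast
    then show "l' = l" using l by (rule LIMSEQ_unique)
  qed
  then show ?thesis using all by simp
qed

lemma fa_int_approx:
  assumes mu: "mu \<in> ba M" and h: "bfun \<Omega> M h" and s: "simple_fn \<Omega> M s"
    and e: "\<And>x. x \<in> \<Omega> \<Longrightarrow> \<bar>h x - s x\<bar> \<le> e"
  shows "\<bar>fa_int \<Omega> M mu h - sint \<Omega> mu s\<bar> \<le> e * tv M mu \<Omega>"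
proof -
  define T where "T = tv M mu \<Omega>"
  obtain t where ts: "approx_seq h t"
    and t: "\<And>n x. x \<in> \<Omega> \<Longrightarrow> \<bar>h x - t n x\<bar> \<le> inverse (real (Suc n))"
    using bfun_approx_seq[OF h] by auto
  have "(\<lambda>n. sint \<Omega> mu (t n)) \<longlonglongrightarrow> fa_int \<Omega> M mu h" using fa_int_tendsto[OF mu h] ts by auto
  then have L1: "(\<lambda>n. \<bar>sint \<Omega> mu (t n) - sint \<Omega> mu s\<bar>) \<longlonglongrightarrow> \<bar>fa_int \<Omega> M mu h - sint \<Omega> mu s\<bar>"
    by (intro tendsto_intros)
  have L2: "(\<lambda>n. (inverse (real (Suc n)) + e) * T) \<longlonglongrightarrow> (0 + e) * T"
    by (intro tendsto_intros LIMSEQ_inverse_real_of_nat)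
  have "\<bar>sint \<Omega> mu (t n) - sint \<Omega> mu s\<bar> \<le> (inverse (real (Suc n)) + e) * T" for n
  proof (rule sint_close[OF mu _ s, folded T_def])
    show "simple_fn \<Omega> M (t n)" using ts unfolding approx_seq_def by auto
    fix x assume x: "x \<in> \<Omega>"
    have "\<bar>t n x - s x\<bar> \<le> \<bar>h x - t n x\<bar> + \<bar>h x - s x\<bar>" by simp
    then show "\<bar>t n x - s x\<bar> \<le> inverse (real (Suc n)) + e" using t[OF x, of n] e[OF x] by simp
  qed
  then show ?thesis using LIMSEQ_le[OF L1 L2] unfolding T_def by auto
qed

lemma bfun_simple: "simple_fn \<Omega> M s \<Longrightarrow> bfun \<Omega> M s"
  unfolding bfun_def by (auto intro!: exI[of _ s])

lemma fa_int_simple: "mu \<in> ba M \<Longrightarrow> simple_fn \<Omega> M s \<Longrightarrow> fa_int \<Omega> M mu s = sint \<Omega> mu s"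
  using fa_int_approx[OF _ bfun_simple, of mu s s 0] by simp

lemma bfun_lin:
  assumes u: "bfun \<Omega> M u" and v: "bfun \<Omega> M v"
  shows "bfun \<Omega> M (\<lambda>x. a * u x + b * v x)"
  unfolding bfun_def
proof (intro allI impI)
  fix e :: real assume e: "e > 0"
  define q where "q = e / (\<bar>a\<bar> + \<bar>b\<bar> + 1)"
  have q: "q > 0" unfolding q_def using e by (simp add: add_nonneg_pos)
  obtain s where s: "simple_fn \<Omega> M s" "\<forall>x\<in>\<Omega>. \<bar>u x - s x\<bar> < q" using u q unfolding bfun_def by blast
  obtain t where t: "simple_fn \<Omega> M t" "\<forall>x\<in>\<Omega>. \<bar>v x - t x\<bar> < q" using v q unfolding bfun_def by blast
  have "\<bar>a * u x + b * v x - (a * s x + b * t x)\<bar> < e" if x: "x \<in> \<Omega>" for x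
  proof -
    have "\<bar>a * u x + b * v x - (a * s x + b * t x)\<bar> \<le> \<bar>a\<bar> * q + \<bar>b\<bar> * q"
      using abs_lincomb_diff_le[of a "u x" b "v x" "s x" "t x"] s(2) t(2) x
        mult_left_mono[of "\<bar>u x - s x\<bar>" q "\<bar>a\<bar>"] mult_left_mono[of "\<bar>v x - t x\<bar>" q "\<bar>b\<bar>"]
      by fastforce
    also have "\<dots> = (\<bar>a\<bar> + \<bar>b\<bar>) * (e / ((\<bar>a\<bar> + \<bar>b\<bar>) + 1))" unfolding q_def by (simp only: distrib_right)
    also have "\<dots> < e" by (rule fraction_lt[OF e]) simp
    finally show ?thesis .
  qed
  then show "\<exists>s. simple_fn \<Omega> M s \<and> (\<forall>x\<in>\<Omega>. \<bar>a * u x + b * v x - s x\<bar> < e)"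
    using simple_comb[OF s(1) t(1), of "\<lambda>p q. a * p + b * q"] by blast
qed

lemma bfun_diff: "bfun \<Omega> M u \<Longrightarrow> bfun \<Omega> M v \<Longrightarrow> bfun \<Omega> M (\<lambda>x. u x - v x)"
  using bfun_lin[of u v 1 "-1"] by simp

lemma bfun_mult_simple:
  assumes u: "bfun \<Omega> M u" and g: "simple_fn \<Omega> M g"
  shows "bfun \<Omega> M (\<lambda>x. u x * g x)"
  unfolding bfun_def
proof (intro allI impI)
  fix e :: real assume e: "e > 0"
  obtain G where G: "\<forall>x\<in>\<Omega>. \<bar>g x\<bar> \<le> G" using simple_bounded[OF g] by auto
  define q where "q = e / (\<bar>G\<bar> + 1)"
  have q: "q > 0" unfolding q_def using e by (simp add: add_nonneg_pos)
  obtain s where s: "simple_fn \<Omega> M s" "\<forall>x\<in>\<Omega>. \<bar>u x - s x\<bar> < q" using u q unfolding bfun_def by blast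
  have "\<bar>u x * g x - s x * g x\<bar> < e" if x: "x \<in> \<Omega>" for x
  proof -
    have "\<bar>u x * g x - s x * g x\<bar> = \<bar>u x - s x\<bar> * \<bar>g x\<bar>"
      by (simp add: abs_mult[symmetric] left_diff_distrib)
    also have "\<dots> \<le> q * \<bar>G\<bar>" using s(2) G x by (intro mult_mono) auto
    also have "\<dots> = \<bar>G\<bar> * (e / (\<bar>G\<bar> + 1))" unfolding q_def by simp
    also have "\<dots> < e" by (rule fraction_lt[OF e]) simp
    finally show ?thesis .
  qed
  then show "\<exists>s. simple_fn \<Omega> M s \<and> (\<forall>x\<in>\<Omega>. \<bar>u x * g x - s x\<bar> < e)"
    using simple_comb[OF s(1) g, of "(*)"] by blast
qed

lemma bfun_indicator: "bfun \<Omega> M u \<Longrightarrow> A \<in> M \<Longrightarrow> bfun \<Omega> M (\<lambda>x. u x * indicator A x)"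
  using bfun_mult_simple simple_indicator by blast

lemma fa_int_lin:
  assumes mu: "mu \<in> ba M" and u: "bfun \<Omega> M u" and v: "bfun \<Omega> M v"
  shows "fa_int \<Omega> M mu (\<lambda>x. a * u x + b * v x) = a * fa_int \<Omega> M mu u + b * fa_int \<Omega> M mu v"
proof -
  define T where "T = tv M mu \<Omega>"
  have "\<bar>fa_int \<Omega> M mu (\<lambda>x. a * u x + b * v x) - (a * fa_int \<Omega> M mu u + b * fa_int \<Omega> M mu v)\<bar>
       \<le> 0 + e * (2 * (\<bar>a\<bar> + \<bar>b\<bar>) * T)" if e: "e > 0" for e
  proof -
    obtain s where s: "simple_fn \<Omega> M s" "\<forall>x\<in>\<Omega>. \<bar>u x - s x\<bar> < e" using u e unfolding bfun_def by blast
    obtain t where t: "simple_fn \<Omega> M t" "\<forall>x\<in>\<Omega>. \<bar>v x - t x\<bar> < e" using v e unfolding bfun_def by blast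
    have st: "simple_fn \<Omega> M (\<lambda>x. a * s x + b * t x)"
      using simple_comb[OF s(1) t(1), of "\<lambda>p q. a * p + b * q"] by simp
    have 1: "\<bar>fa_int \<Omega> M mu (\<lambda>x. a * u x + b * v x) - sint \<Omega> mu (\<lambda>x. a * s x + b * t x)\<bar>
        \<le> ((\<bar>a\<bar> + \<bar>b\<bar>) * e) * T"
    proof (rule fa_int_approx[OF mu bfun_lin[OF u v] st, folded T_def])
      fix x assume x: "x \<in> \<Omega>"
      have "\<bar>a * u x + b * v x - (a * s x + b * t x)\<bar> \<le> \<bar>a\<bar> * e + \<bar>b\<bar> * e"
        using abs_lincomb_diff_le[of a "u x" b "v x" "s x" "t x"] s(2) t(2) x
          mult_left_mono[of "\<bar>u x - s x\<bar>" e "\<bar>a\<bar>"] mult_left_mono[of "\<bar>v x - t x\<bar>" e "\<bar>b\<bar>"]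
        by fastforce
      then show "\<bar>a * u x + b * v x - (a * s x + b * t x)\<bar> \<le> (\<bar>a\<bar> + \<bar>b\<bar>) * e"
        by (simp add: algebra_simps)
    qed
    have 2: "\<bar>fa_int \<Omega> M mu u - sint \<Omega> mu s\<bar> \<le> e * T"
      using fa_int_approx[OF mu u s(1), of e] s(2) unfolding T_def by fastforce
    have 3: "\<bar>fa_int \<Omega> M mu v - sint \<Omega> mu t\<bar> \<le> e * T"
      using fa_int_approx[OF mu v t(1), of e] t(2) unfolding T_def by fastforce
    have lin: "sint \<Omega> mu (\<lambda>x. a * s x + b * t x) = a * sint \<Omega> mu s + b * sint \<Omega> mu t"
      using sint_add[OF ba_fin_add[OF mu] simple_map[OF s(1)] simple_map[OF t(1)],
          of "\<lambda>p. a * p" "\<lambda>p. b * p"]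
        sint_cmult[OF ba_fin_add[OF mu] s(1), of a] sint_cmult[OF ba_fin_add[OF mu] t(1), of b]
      by simp
    have "\<bar>a * fa_int \<Omega> M mu u - a * sint \<Omega> mu s\<bar> \<le> \<bar>a\<bar> * (e * T)"
      using 2 by (simp add: right_diff_distrib[symmetric] abs_mult mult_left_mono)
    moreover have "\<bar>b * fa_int \<Omega> M mu v - b * sint \<Omega> mu t\<bar> \<le> \<bar>b\<bar> * (e * T)"
      using 3 by (simp add: right_diff_distrib[symmetric] abs_mult mult_left_mono)
    ultimately show ?thesis using 1 lin by (simp add: algebra_simps) linarith
  qed
  then have "\<bar>fa_int \<Omega> M mu (\<lambda>x. a * u x + b * v x) - (a * fa_int \<Omega> M mu u + b * fa_int \<Omega> M mu v)\<bar> \<le> 0"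
    by (rule le_by_scaled_epsilon)
  then show ?thesis by simp
qed

lemma fa_int_diff:
  "mu \<in> ba M \<Longrightarrow> bfun \<Omega> M u \<Longrightarrow> bfun \<Omega> M v
    \<Longrightarrow> fa_int \<Omega> M mu (\<lambda>x. u x - v x) = fa_int \<Omega> M mu u - fa_int \<Omega> M mu v"
  using fa_int_lin[of mu u v 1 "-1"] by simp

lemma fa_int_nonneg:
  assumes mu: "mu \<in> ba M" and nn: "\<And>A. A \<in> M \<Longrightarrow> 0 \<le> mu A" and u: "bfun \<Omega> M u"
    and pos: "\<And>x. x \<in> \<Omega> \<Longrightarrow> 0 \<le> u x"
  shows "0 \<le> fa_int \<Omega> M mu u"
proof -
  define T where "T = tv M mu \<Omega>"
  have "0 \<le> fa_int \<Omega> M mu u + e * (mu \<Omega> + T)" if e: "e > 0" for e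
  proof -
    obtain s where s: "simple_fn \<Omega> M s" "\<forall>x\<in>\<Omega>. \<bar>u x - s x\<bar> < e" using u e unfolding bfun_def by blast
    have "- e \<le> s x" if x: "x \<in> \<Omega>" for x
      using s(2) x pos[OF x] by (force simp: abs_less_iff)
    then have "sint \<Omega> mu (\<lambda>x. - e) \<le> sint \<Omega> mu s"
      by (intro sint_mono[OF ba_fin_add[OF mu] nn simple_const s(1)])
    then have "- e * mu \<Omega> \<le> sint \<Omega> mu s" using sint_const[OF ba_fin_add[OF mu]] by simp
    moreover have "\<bar>fa_int \<Omega> M mu u - sint \<Omega> mu s\<bar> \<le> e * T"
      using fa_int_approx[OF mu u s(1), of e] s(2) unfolding T_def by fastforce
    ultimately show ?thesis by (simp add: algebra_simps)
  qed
  then show ?thesis using le_by_scaled_epsilon[of 0 "fa_int \<Omega> M mu u" "mu \<Omega> + T"] by simp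
qed

lemma fa_int_mono:
  assumes mu: "mu \<in> ba M" and nn: "\<And>A. A \<in> M \<Longrightarrow> 0 \<le> mu A"
    and u: "bfun \<Omega> M u" and v: "bfun \<Omega> M v" and le: "\<And>x. x \<in> \<Omega> \<Longrightarrow> u x \<le> v x"
  shows "fa_int \<Omega> M mu u \<le> fa_int \<Omega> M mu v"
  using fa_int_nonneg[OF mu nn bfun_diff[OF v u]] le fa_int_diff[OF mu v u] by simp

lemma fa_int_bound:
  assumes mu: "mu \<in> ba M" and u: "bfun \<Omega> M u" and K: "\<And>x. x \<in> \<Omega> \<Longrightarrow> \<bar>u x\<bar> \<le> K"
  shows "\<bar>fa_int \<Omega> M mu u\<bar> \<le> K * tv M mu \<Omega>"
proof -
  define T where "T = tv M mu \<Omega>"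
  have "\<bar>fa_int \<Omega> M mu u\<bar> \<le> K * T + e * (2 * T)" if e: "e > 0" for e
  proof -
    obtain s where s: "simple_fn \<Omega> M s" "\<forall>x\<in>\<Omega>. \<bar>u x - s x\<bar> < e" using u e unfolding bfun_def by blast
    have "\<bar>sint \<Omega> mu s\<bar> \<le> (K + e) * T"
      by (rule sint_bound[OF mu s(1), folded T_def]) (use s(2) K in force)
    moreover have "\<bar>fa_int \<Omega> M mu u - sint \<Omega> mu s\<bar> \<le> e * T"
      using fa_int_approx[OF mu u s(1), of e] s(2) unfolding T_def by fastforce
    ultimately show ?thesis by (simp add: algebra_simps)
  qed
  then show ?thesis unfolding T_def by (rule le_by_scaled_epsilon)
qed

lemma fa_int_indicator_bound:
  assumes mu: "mu \<in> ba M" and nn: "\<And>A. A \<in> M \<Longrightarrow> 0 \<le> mu A" and u: "bfun \<Omega> M u"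
    and K: "\<And>x. x \<in> \<Omega> \<Longrightarrow> \<bar>u x\<bar> \<le> K" and E: "E \<in> M"
  shows "\<bar>fa_int \<Omega> M mu (\<lambda>x. u x * indicator E x)\<bar> \<le> K * mu E"
proof -
  have bi: "bfun \<Omega> M (\<lambda>x. K * indicator E x)"
    by (rule bfun_simple, rule simple_map, rule simple_indicator[OF E])
  have ui: "bfun \<Omega> M (\<lambda>x. u x * indicator E x)" by (rule bfun_indicator[OF u E])
  have ki: "fa_int \<Omega> M mu (\<lambda>x. K * indicator E x) = K * mu E"
    using fa_int_simple[OF mu simple_map[OF simple_indicator[OF E]], of "\<lambda>t. K * t"]
      sint_cmult[OF ba_fin_add[OF mu] simple_indicator[OF E], of K]
      sint_indicator[OF ba_fin_add[OF mu] E] by simp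
  have K2: "u x \<le> K" "- K \<le> u x" if "x \<in> \<Omega>" for x using K[OF that] by (auto simp: abs_le_iff)
  have "fa_int \<Omega> M mu (\<lambda>x. u x * indicator E x) \<le> fa_int \<Omega> M mu (\<lambda>x. K * indicator E x)"
    by (rule fa_int_mono[OF mu nn ui bi]) (use K2 in \<open>auto simp: indicator_def\<close>)
  moreover have "fa_int \<Omega> M mu (\<lambda>x. (-1) * (K * indicator E x) + 0 * (u x * indicator E x))
      \<le> fa_int \<Omega> M mu (\<lambda>x. u x * indicator E x)"
    by (rule fa_int_mono[OF mu nn bfun_lin[OF bi ui] ui]) (use K2 in \<open>auto simp: indicator_def\<close>)
  moreover have "fa_int \<Omega> M mu (\<lambda>x. (-1) * (K * indicator E x) + 0 * (u x * indicator E x))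
      = - (K * mu E)"
    using fa_int_lin[OF mu bi ui, of "-1" 0] ki by simp
  ultimately show ?thesis using ki by (simp add: abs_le_iff)
qed

end

section \<open>Approximation by step densities\<close>

text \<open>Splitting a cell with masses \<open>a + b\<close> and weights \<open>x + y\<close> raises the energy
  \<open>a\<^sup>2/x\<close> by a weighted variance.\<close>
lemma energy_gain_eq:
  fixes a b x y :: real assumes "x > 0" "y > 0"
  shows "a\<^sup>2/x + b\<^sup>2/y - (a+b)\<^sup>2/(x+y) = x * (a/x - (a+b)/(x+y))\<^sup>2 + y * (b/y - (a+b)/(x+y))\<^sup>2"
proof -
  have "x + y > 0" using assms by simp
  then show ?thesis using assms by (simp add: divide_simps power2_eq_square) algebra
qed

lemma abs_le_plus_square_div:
  fixes d t :: real assumes "t > 0" shows "\<bar>d\<bar> \<le> t + d\<^sup>2/t"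
proof -
  have "0 \<le> (\<bar>d\<bar> - t)\<^sup>2" by simp
  then have "2*t*\<bar>d\<bar> \<le> t\<^sup>2 + d\<^sup>2" by (simp add: power2_eq_square algebra_simps)
  moreover have "0 \<le> t*\<bar>d\<bar>" using assms by simp
  ultimately have "t*\<bar>d\<bar> \<le> t\<^sup>2 + d\<^sup>2" by linarith
  then show ?thesis using assms by (simp add: field_simps power2_eq_square)
qed

lemma cell_error_le_energy_gain:
  fixes a b x y t C :: real
  assumes x: "x \<ge> 0" and y: "y \<ge> 0" and a: "\<bar>a\<bar> \<le> C*x" and b: "\<bar>b\<bar> \<le> C*y" and t: "t > 0"
  shows "\<bar>a - (a+b)/(x+y)*x\<bar> \<le> t*x + (a\<^sup>2/x + b\<^sup>2/y - (a+b)\<^sup>2/(x+y))/t"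
proof (cases "x = 0 \<or> y = 0")
  case True
  then show ?thesis using a b x t by (auto simp: power2_eq_square)
next
  case False
  then have xy: "x > 0" "y > 0" using x y by auto
  let ?d = "a/x - (a+b)/(x+y)"
  have "a - (a+b)/(x+y)*x = x * ?d" using xy by (simp add: right_diff_distrib)
  then have "\<bar>a - (a+b)/(x+y)*x\<bar> = x * \<bar>?d\<bar>" using xy by (simp add: abs_mult)
  also have "\<dots> \<le> x * (t + ?d\<^sup>2/t)"
    using abs_le_plus_square_div[OF t, of ?d] xy by (simp add: mult_left_mono)
  also have "\<dots> = t*x + (x * ?d\<^sup>2)/t" by (simp add: algebra_simps)
  also have "\<dots> \<le> t*x + (a\<^sup>2/x + b\<^sup>2/y - (a+b)\<^sup>2/(x+y))/t"
    using energy_gain_eq[OF xy, of a b] xy t by (simp add: divide_right_mono)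
  finally show ?thesis .
qed

lemma sum_lessThan_add:
  fixes f :: "nat \<Rightarrow> real"
  shows "(\<Sum>i<m+n. f i) = (\<Sum>i<m. f i) + (\<Sum>i<n. f (i + m))"
proof -
  have "(\<Sum>i<m+n. f i) = (\<Sum>i\<in>{0..<m}. f i) + (\<Sum>i\<in>{m..<m+n}. f i)"
    using sum.atLeastLessThan_concat[of 0 m "m+n" f] by (simp add: atLeast0LessThan)
  also have "(\<Sum>i\<in>{m..<m+n}. f i) = (\<Sum>i\<in>{0..<n}. f (i + m))"
    using sum.shift_bounds_nat_ivl[of f 0 m n] by (simp add: add.commute)
  finally show ?thesis by (simp add: atLeast0LessThan)
qed

context algebra
begin

definition energy :: "('a set \<Rightarrow> real) \<Rightarrow> ('a set \<Rightarrow> real) \<Rightarrow> 'i set \<Rightarrow> ('i \<Rightarrow> 'a set) \<Rightarrow> real" where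
  "energy rho nu I B = (\<Sum>i\<in>I. (rho (B i))\<^sup>2 / nu (B i))"

lemma energy_le:
  assumes fanu: "fin_add M nu" and nunn: "\<And>A. A \<in> M \<Longrightarrow> 0 \<le> nu A"
    and bnd: "\<And>A. A \<in> M \<Longrightarrow> \<bar>rho A\<bar> \<le> C * nu A" and P: "finite_partition I B"
  shows "energy rho nu I B \<le> C\<^sup>2 * nu \<Omega>"
proof -
  have cell: "(rho A)\<^sup>2 / nu A \<le> C\<^sup>2 * nu A" if "A \<in> M" for A
  proof (cases "nu A = 0")
    case False
    then have p: "nu A > 0" using nunn[OF that] by simp
    have "\<bar>rho A\<bar>\<^sup>2 \<le> (C * nu A)\<^sup>2" using bnd[OF that] by (intro power_mono) auto
    then show ?thesis using p by (simp add: divide_simps power2_eq_square mult_ac)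
  qed (use nunn that in simp)
  note P = finite_partitionD[OF P]
  have "energy rho nu I B \<le> (\<Sum>i\<in>I. C\<^sup>2 * nu (B i))"
    unfolding energy_def using P(2) cell by (intro sum_mono) auto
  also have "\<dots> = C\<^sup>2 * nu \<Omega>"
    using fin_add_UN[OF fanu P(1,2,4)] P(3) by (simp add: sum_distrib_left)
  finally show ?thesis .
qed

definition refine :: "nat \<Rightarrow> (nat \<Rightarrow> 'a set) \<Rightarrow> 'a set \<Rightarrow> nat \<Rightarrow> 'a set" where
  "refine n B A i = (if i < n then B i \<inter> A else B (i - n) - A)"

lemma refine_partition:
  assumes P: "finite_partition {..<n} B" and A: "A \<in> M"
  shows "finite_partition {..<n+n} (refine n B A)"
proof -
  note P = finite_partitionD[OF P]
  have mem: "refine n B A i \<in> M" if "i < n + n" for i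
  proof (cases "i < n")
    case True then show ?thesis using P(2)[of i] A by (simp add: refine_def Int)
  next
    case False then show ?thesis using P(2)[of "i - n"] A that by (simp add: refine_def Diff)
  qed
  have dj: "disjoint_family_on (refine n B A) {..<n+n}"
    unfolding disjoint_family_on_def
  proof (intro ballI impI)
    fix i j assume ij: "i \<in> {..<n+n}" "j \<in> {..<n+n}" "i \<noteq> j"
    have dB: "k < n \<Longrightarrow> l < n \<Longrightarrow> k \<noteq> l \<Longrightarrow> B k \<inter> B l = {}" for k l
      using P(4) unfolding disjoint_family_on_def by auto
    have "i - n \<noteq> j - n" if "\<not> i < n" "\<not> j < n" using ij that by auto
    moreover have "i - n < n" "j - n < n" using ij by auto
    ultimately show "refine n B A i \<inter> refine n B A j = {}"
      using ij dB[of i j] dB[of "i - n" "j - n"] dB[of i "j - n"] dB[of "i - n" j]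
      unfolding refine_def by (cases "i < n"; cases "j < n") auto
  qed
  have cover: "\<Omega> \<subseteq> (\<Union>i\<in>{..<n+n}. refine n B A i)"
  proof
    fix x assume "x \<in> \<Omega>"
    then obtain i where i: "i < n" "x \<in> B i" using P(3) by auto
    show "x \<in> (\<Union>i\<in>{..<n+n}. refine n B A i)"
    proof (cases "x \<in> A")
      case True then show ?thesis using i by (intro UN_I[of i]) (auto simp: refine_def)
    next
      case False then show ?thesis using i by (intro UN_I[of "i + n"]) (auto simp: refine_def)
    qed
  qed
  have "(\<Union>i\<in>{..<n+n}. refine n B A i) \<subseteq> \<Omega>" using mem sets_into_space by blast
  then show ?thesis using mem dj cover unfolding finite_partition_def by auto
qed

lemma energy_refine:
  "energy rho nu {..<n+n} (refine n B A)
    = (\<Sum>i<n. (rho (B i \<inter> A))\<^sup>2 / nu (B i \<inter> A) + (rho (B i - A))\<^sup>2 / nu (B i - A))"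
  unfolding energy_def sum_lessThan_add sum.distrib by (simp add: refine_def)

lemma step_density_error:
  assumes farho: "fin_add M rho" and fanu: "fin_add M nu" and nunn: "\<And>A. A \<in> M \<Longrightarrow> 0 \<le> nu A"
    and bnd: "\<And>A. A \<in> M \<Longrightarrow> \<bar>rho A\<bar> \<le> C * nu A"
    and P: "finite_partition {..<n} B" and A: "A \<in> M" and t: "t > 0"
  shows "\<bar>rho A - (\<Sum>i<n. rho (B i) / nu (B i) * nu (B i \<inter> A))\<bar>
    \<le> t * nu A + (energy rho nu {..<n+n} (refine n B A) - energy rho nu {..<n} B) / t"
proof -
  note Pd = finite_partitionD[OF P]
  let ?a = "\<lambda>i. rho (B i \<inter> A)" and ?b = "\<lambda>i. rho (B i - A)"
  let ?x = "\<lambda>i. nu (B i \<inter> A)" and ?y = "\<lambda>i. nu (B i - A)"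
  have split: "rho (B i) = ?a i + ?b i" "nu (B i) = ?x i + ?y i" if "i < n" for i
    using fin_add_split[OF farho Pd(2) A] fin_add_split[OF fanu Pd(2) A] that by auto
  have A_parts: "(\<Union>i<n. B i \<inter> A) = A" using Pd(3) sets_into_space[OF A] by auto
  have parts: "mu A = (\<Sum>i<n. mu (B i \<inter> A))" if "fin_add M mu" for mu
    using fin_add_UN[OF that, of "{..<n}" "\<lambda>i. B i \<inter> A"] Pd(2,4) A A_parts
    by (auto simp: disjoint_family_on_def)
  have "\<bar>rho A - (\<Sum>i<n. rho (B i) / nu (B i) * ?x i)\<bar>
      = \<bar>\<Sum>i<n. ?a i - (?a i + ?b i) / (?x i + ?y i) * ?x i\<bar>"
    unfolding parts[OF farho] sum_subtractf[symmetric] by (intro arg_cong[where f=abs] sum.cong) (auto simp: split)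
  also have "\<dots> \<le> (\<Sum>i<n. \<bar>?a i - (?a i + ?b i) / (?x i + ?y i) * ?x i\<bar>)" by (rule sum_abs)
  also have "\<dots> \<le> (\<Sum>i<n. t * ?x i
      + ((?a i)\<^sup>2 / ?x i + (?b i)\<^sup>2 / ?y i - (?a i + ?b i)\<^sup>2 / (?x i + ?y i)) / t)"
  proof (rule sum_mono)
    fix i assume "i \<in> {..<n}"
    then have m: "B i \<inter> A \<in> M" "B i - A \<in> M" using Pd(2) A by auto
    show "\<bar>?a i - (?a i + ?b i) / (?x i + ?y i) * ?x i\<bar>
      \<le> t * ?x i + ((?a i)\<^sup>2 / ?x i + (?b i)\<^sup>2 / ?y i - (?a i + ?b i)\<^sup>2 / (?x i + ?y i)) / t"
      by (rule cell_error_le_energy_gain[OF nunn[OF m(1)] nunn[OF m(2)] bnd[OF m(1)] bnd[OF m(2)] t])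
  qed
  also have "\<dots> = t * nu A + (energy rho nu {..<n+n} (refine n B A) - energy rho nu {..<n} B) / t"
  proof -
    have "energy rho nu {..<n} B = (\<Sum>i<n. (?a i + ?b i)\<^sup>2 / (?x i + ?y i))"
      unfolding energy_def by (rule sum.cong) (auto simp: split)
    then show ?thesis
      unfolding energy_refine parts[OF fanu]
      by (simp add: sum.distrib sum_subtractf sum_distrib_left sum_divide_distrib diff_divide_distrib add_divide_distrib)
  qed
  finally show ?thesis .
qed

text \<open>Step densities: a set function dominated by \<open>C nu\<close> is uniformly approximated by
  \<open>A \<mapsto> \<Sum>\<^sub>i rho(B\<^sub>i)/nu(B\<^sub>i) nu(B\<^sub>i \<inter> A)\<close> for a partition of nearly maximal energy.\<close>
lemma step_density_approx:
  assumes farho: "fin_add M rho" and fanu: "fin_add M nu" and nunn: "\<And>A. A \<in> M \<Longrightarrow> 0 \<le> nu A"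
    and bnd: "\<And>A. A \<in> M \<Longrightarrow> \<bar>rho A\<bar> \<le> C * nu A" and e: "e > 0"
  shows "\<exists>(n::nat) B. finite_partition {..<n} B
    \<and> (\<forall>A\<in>M. \<bar>rho A - (\<Sum>i<n. rho (B i) / nu (B i) * nu (B i \<inter> A))\<bar> \<le> e)"
proof -
  let ?Es = "{energy rho nu {..<n} B | (n :: nat) B. finite_partition {..<n} B}"
  have bddE: "bdd_above ?Es"
    using energy_le[OF fanu nunn bnd] unfolding bdd_above_def by blast
  have "finite_partition {..<1::nat} (\<lambda>_. \<Omega>)"
    unfolding finite_partition_def by (auto simp: disjoint_family_on_def)
  then have neE: "?Es \<noteq> {}" by blast
  define S where "S = Sup ?Es"
  have Sup: "energy rho nu {..<n} B \<le> S" if "finite_partition {..<n} B" for n :: nat and B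
    unfolding S_def using that by (intro cSup_upper[OF _ bddE]) blast
  have nuO: "0 \<le> nu \<Omega>" using nunn by auto
  define t where "t = e / (2 * (nu \<Omega> + 1))"
  have t: "t > 0" unfolding t_def using e nuO by (simp add: add_nonneg_pos)
  have tnu: "t * nu \<Omega> \<le> e / 2" unfolding t_def using e nuO by (simp add: field_simps)
  obtain n :: nat and B where P: "finite_partition {..<n} B" and near_max: "energy rho nu {..<n} B > S - t * e / 2"
  proof -
    have "S - t * e / 2 < S" using t e by simp
    then obtain y where "y \<in> ?Es" "S - t * e / 2 < y"
      using less_cSup_iff[OF neE bddE] unfolding S_def by blast
    then show ?thesis using that by blast
  qed
  have "\<bar>rho A - (\<Sum>i<n. rho (B i) / nu (B i) * nu (B i \<inter> A))\<bar> \<le> e" if A: "A \<in> M" for A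
  proof -
    have gain: "energy rho nu {..<n+n} (refine n B A) - energy rho nu {..<n} B \<le> t * e / 2"
      using Sup[OF refine_partition[OF P A]] near_max by simp
    have "(energy rho nu {..<n+n} (refine n B A) - energy rho nu {..<n} B) / t \<le> (t * e / 2) / t"
      using gain t by (intro divide_right_mono) auto
    also have "\<dots> = e / 2" using t by simp
    finally have "(energy rho nu {..<n+n} (refine n B A) - energy rho nu {..<n} B) / t \<le> e / 2" .
    moreover have "t * nu A \<le> t * nu \<Omega>" using fin_add_le_space[OF fanu nunn A] t by simp
    ultimately have "t * nu A + (energy rho nu {..<n+n} (refine n B A) - energy rho nu {..<n} B) / t \<le> e"
      using tnu by linarith
    then show ?thesis using step_density_error[OF farho fanu nunn bnd P A t] by linarith
  qed
  then show ?thesis using P by blast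
qed

end

section \<open>An approximate Radon-Nikodym theorem\<close>

context algebra
begin

definition excess :: "('a set \<Rightarrow> real) \<Rightarrow> ('a set \<Rightarrow> real) \<Rightarrow> real \<Rightarrow> 'a set \<Rightarrow> real" where
  "excess m nu k C = max 0 (m C - k * nu C)"

lemma excess_sum_eq:
  fixes k :: real
  assumes fam: "fin_add M m" and fanu: "fin_add M nu" and P: "admissible M A P"
  defines "U \<equiv> \<Union>{C\<in>P. k * nu C < m C}"
  shows "(\<Sum>C\<in>P. excess m nu k C) = m U - k * nu U" and "U \<in> M" and "U \<subseteq> A"
proof -
  let ?P' = "{C\<in>P. k * nu C < m C}"
  have fin: "finite ?P'" "?P' \<subseteq> M" "disjoint ?P'"
    using P unfolding admissible_def disjoint_def by auto
  show "U \<in> M" "U \<subseteq> A" using fin P unfolding U_def admissible_def by auto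
  have "(\<Sum>C\<in>P. excess m nu k C) = (\<Sum>C\<in>?P'. m C - k * nu C)"
    using P unfolding admissible_def excess_def by (subst sum.mono_neutral_right[of P ?P']) auto
  also have "\<dots> = m U - k * nu U"
    unfolding U_def fin_add_Union[OF fam fin] fin_add_Union[OF fanu fin]
    by (simp add: sum_subtractf sum_distrib_left)
  finally show "(\<Sum>C\<in>P. excess m nu k C) = m U - k * nu U" .
qed

context
  fixes m nu :: "'a set \<Rightarrow> real" and k :: real
  assumes fam: "fin_add M m" and mnn: "\<And>A. A \<in> M \<Longrightarrow> 0 \<le> m A"
    and fanu: "fin_add M nu" and nunn: "\<And>A. A \<in> M \<Longrightarrow> 0 \<le> nu A" and k: "0 \<le> k"
begin

lemma excess_sum_le: "A \<in> M \<Longrightarrow> admissible M A P \<Longrightarrow> (\<Sum>C\<in>P. excess m nu k C) \<le> m A"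
  using excess_sum_eq[OF fam fanu, of A P k] fin_add_mono[OF fam mnn, of A] k nunn
  by (smt (verit) mult_nonneg_nonneg)

lemma excess_bounded_subadditive: "bounded_subadditive \<Omega> M (excess m nu k) (m \<Omega>)"
proof unfold_locales
  show "0 \<le> excess m nu k A" for A unfolding excess_def by simp
  show "excess m nu k {} = 0" unfolding excess_def using fin_add_empty[OF fam] fin_add_empty[OF fanu] by simp
  show "excess m nu k (A \<union> B) \<le> excess m nu k A + excess m nu k B"
    if "A \<in> M" "B \<in> M" "A \<inter> B = {}" for A B
    using fam fanu that unfolding fin_add_def excess_def by (auto simp: algebra_simps)
  show "(\<Sum>B\<in>P. excess m nu k B) \<le> m \<Omega>" if "admissible M \<Omega> P" for P
    using excess_sum_le[OF top that] .
qed

text \<open>If \<open>m \<le> tau\<close> and \<open>tau < e\<close> on sets with \<open>nu < d\<close>, the envelope of the excess over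
  \<open>k nu\<close> is at most \<open>e\<close> as soon as \<open>k d > m(\<Omega>)\<close>: where \<open>m > k nu\<close> the set is \<open>nu\<close>-small.\<close>
lemma excess_envelope_small:
  assumes mtau: "\<And>A. A \<in> M \<Longrightarrow> m A \<le> tau A"
    and d: "d > 0" "\<forall>A\<in>M. nu A < d \<longrightarrow> tau A < e" and e: "e > 0" and kd: "m \<Omega> < k * d"
  shows "psup M (excess m nu k) \<Omega> \<le> e"
proof (rule bounded_subadditive.psup_least[OF excess_bounded_subadditive])
  fix P assume P: "admissible M \<Omega> P"
  note U = excess_sum_eq[OF fam fanu P, of k]
  let ?U = "\<Union>{C\<in>P. k * nu C < m C}"
  show "(\<Sum>C\<in>P. excess m nu k C) \<le> e"
  proof (cases "m ?U \<le> k * nu ?U")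
    case True then show ?thesis using U(1) e by simp
  next
    case False
    then have "k * nu ?U < k * d" using fin_add_le_space[OF fam mnn U(2)] kd by simp
    then have "nu ?U < d" using k by (auto simp: mult_less_cancel_left)
    then have "tau ?U < e" using d U(2) by auto
    moreover have "0 \<le> k * nu ?U" using k nunn[OF U(2)] by simp
    ultimately show ?thesis using U(1) mtau[OF U(2)] by linarith
  qed
qed

end

text \<open>Take \<open>s = m - r\<close>, where \<open>r\<close> is the
  finitely additive envelope of the excess of \<open>m\<close> over \<open>k nu\<close>.\<close>
lemma truncation:
  fixes m nu tau :: "'a set \<Rightarrow> real"
  assumes fam: "fin_add M m" and mnn: "\<And>A. A \<in> M \<Longrightarrow> 0 \<le> m A"
    and fanu: "fin_add M nu" and nunn: "\<And>A. A \<in> M \<Longrightarrow> 0 \<le> nu A"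
    and mtau: "\<And>A. A \<in> M \<Longrightarrow> m A \<le> tau A"
    and ac: "\<forall>\<epsilon>>0. \<exists>\<delta>>0. \<forall>A\<in>M. nu A < \<delta> \<longrightarrow> tau A < \<epsilon>"
    and e: "e > 0"
  shows "\<exists>k\<ge>0. \<exists>s. fin_add M s \<and> (\<forall>A\<in>M. 0 \<le> s A \<and> s A \<le> k * nu A \<and> \<bar>m A - s A\<bar> \<le> e)"
proof -
  obtain d where d: "d > 0" "\<forall>A\<in>M. nu A < d \<longrightarrow> tau A < e" using ac e by auto
  define k where "k = m \<Omega> / d + 1"
  have k: "0 \<le> k" and kd: "m \<Omega> < k * d"
    using mnn[OF top] d unfolding k_def by (auto simp: field_simps)
  interpret G: bounded_subadditive \<Omega> M "excess m nu k" "m \<Omega>"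
    by (rule excess_bounded_subadditive[OF fam mnn fanu nunn k])
  define r where "r = psup M (excess m nu k)"
  have r_small: "r \<Omega> \<le> e"
    unfolding r_def by (rule excess_envelope_small[OF fam mnn fanu nunn k mtau d e kd])
  define s where "s A = m A - r A" for A
  have "fin_add M s"
    unfolding s_def using fin_add_lin[OF fam G.psup_fin_add, of 1 "-1"] by (simp add: r_def)
  moreover have "0 \<le> s A \<and> s A \<le> k * nu A \<and> \<bar>m A - s A\<bar> \<le> e" if A: "A \<in> M" for A
  proof -
    have "r A \<le> m A"
      unfolding r_def by (rule G.psup_least) (rule excess_sum_le[OF fam mnn fanu nunn k A])
    moreover have "excess m nu k A \<le> r A" unfolding r_def by (rule G.psup_ge[OF A])
    moreover have "0 \<le> r A" "r A \<le> r \<Omega>" unfolding r_def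
      using G.psup_nonneg[OF A] fin_add_le_space[OF G.psup_fin_add G.psup_nonneg A] by auto
    ultimately show ?thesis using r_small unfolding s_def excess_def by auto
  qed
  ultimately show ?thesis using k by (intro exI[of _ k]) auto
qed

text \<open>Truncation followed by step densities: a nonnegative \<open>m\<close> dominated by some \<open>tau << nu\<close>
  is uniformly approximated by combinations \<open>\<Sum>\<^sub>i w\<^sub>i nu(B\<^sub>i \<inter> .)\<close>.\<close>
lemma combination_approx_nonneg:
  assumes nu: "nu \<in> ba M" and nunn: "\<And>A. A \<in> M \<Longrightarrow> 0 \<le> nu A"
    and fam: "fin_add M m" and mnn: "\<And>A. A \<in> M \<Longrightarrow> 0 \<le> m A"
    and mtau: "\<And>A. A \<in> M \<Longrightarrow> m A \<le> tau A"
    and ac: "\<forall>\<epsilon>>0. \<exists>\<delta>>0. \<forall>A\<in>M. nu A < \<delta> \<longrightarrow> tau A < \<epsilon>" and e: "e > 0"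
  shows "\<exists>n::nat. \<exists>w B. (\<forall>i<n. B i \<in> M) \<and> (\<forall>E\<in>M. \<bar>m E - (\<Sum>i<n. w i * nu (B i \<inter> E))\<bar> \<le> e)"
proof -
  obtain k s where "k \<ge> 0" and s: "fin_add M s"
    and ks: "\<And>A. A \<in> M \<Longrightarrow> 0 \<le> s A \<and> s A \<le> k * nu A \<and> \<bar>m A - s A\<bar> \<le> e/2"
    using truncation[OF fam mnn ba_fin_add[OF nu] nunn mtau ac, of "e/2"] e by auto
  have "\<bar>s A\<bar> \<le> k * nu A" if "A \<in> M" for A using ks[OF that] by auto
  then obtain n :: nat and B where P: "finite_partition {..<n} B"
    and approx: "\<forall>A\<in>M. \<bar>s A - (\<Sum>i<n. s (B i) / nu (B i) * nu (B i \<inter> A))\<bar> \<le> e/2"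
    using step_density_approx[OF s ba_fin_add[OF nu] nunn, of k "e/2"] e by auto
  have "\<bar>m E - (\<Sum>i<n. s (B i) / nu (B i) * nu (B i \<inter> E))\<bar> \<le> e" if E: "E \<in> M" for E
  proof -
    let ?S = "\<Sum>i<n. s (B i) / nu (B i) * nu (B i \<inter> E)"
    have "\<bar>s E - ?S\<bar> \<le> e/2" "\<bar>m E - s E\<bar> \<le> e/2" using approx ks[OF E] E by auto
    moreover have "\<bar>m E - ?S\<bar> \<le> \<bar>m E - s E\<bar> + \<bar>s E - ?S\<bar>"
      using abs_triangle_ineq[of "m E - s E" "s E - ?S"] by simp
    ultimately show ?thesis by linarith
  qed
  then show ?thesis using finite_partitionD(2)[OF P]
    by (intro exI[of _ n] exI[of _ "\<lambda>i. s (B i) / nu (B i)"] exI[of _ B]) auto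
qed

text \<open>Apply the nonnegative case to
  \<open>(|mu| \<plusminus> mu)/2\<close>, which are dominated by \<open>|mu| << |lam|\<close>.\<close>
lemma combination_approx:
  assumes lam: "lam \<in> ba M" and mu: "mu \<in> ba_ac M lam" and e: "e > 0"
  shows "\<exists>n::nat. \<exists>w B. (\<forall>i<n. B i \<in> M)
    \<and> (\<forall>E\<in>M. \<bar>mu E - (\<Sum>i<n. w i * tv M lam (B i \<inter> E))\<bar> \<le> e)"
proof -
  let ?nu = "tv M lam" and ?tau = "tv M mu"
  have mub: "mu \<in> ba M" using mu unfolding ba_ac_def by auto
  have ac: "\<forall>\<epsilon>>0. \<exists>\<delta>>0. \<forall>A\<in>M. ?nu A < \<delta> \<longrightarrow> ?tau A < \<epsilon>" using mu unfolding ba_ac_def by auto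
  note nu = tv_ba[OF lam] tv_nonneg[OF lam]
  define mp where "mp A = (1/2) * ?tau A + (1/2) * mu A" for A
  define mn where "mn A = (1/2) * ?tau A + (-1/2) * mu A" for A
  have fa: "fin_add M mp" "fin_add M mn"
    unfolding mp_def[abs_def] mn_def[abs_def]
    by (rule fin_add_lin[OF tv_fin_add[OF mub] ba_fin_add[OF mub]])+
  have bounds: "0 \<le> mp A" "0 \<le> mn A" "mp A \<le> ?tau A" "mn A \<le> ?tau A" if "A \<in> M" for A
    using tv_ge_abs[OF mub that] unfolding mp_def mn_def by (auto simp: abs_le_iff)
  have e2: "e/2 > 0" using e by simp
  obtain n1 :: nat and w1 B1 where 1: "\<forall>i<n1. B1 i \<in> M"
    "\<forall>E\<in>M. \<bar>mp E - (\<Sum>i<n1. w1 i * ?nu (B1 i \<inter> E))\<bar> \<le> e/2"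
    using combination_approx_nonneg[OF nu fa(1) bounds(1) bounds(3) ac e2] by blast
  obtain n2 :: nat and w2 B2 where 2: "\<forall>i<n2. B2 i \<in> M"
    "\<forall>E\<in>M. \<bar>mn E - (\<Sum>i<n2. w2 i * ?nu (B2 i \<inter> E))\<bar> \<le> e/2"
    using combination_approx_nonneg[OF nu fa(2) bounds(2) bounds(4) ac e2] by blast
  define w where "w i = (if i < n1 then w1 i else - w2 (i - n1))" for i
  define B where "B i = (if i < n1 then B1 i else B2 (i - n1))" for i
  have "\<bar>mu E - (\<Sum>i<n1+n2. w i * ?nu (B i \<inter> E))\<bar> \<le> e" if E: "E \<in> M" for E
  proof -
    have "(\<Sum>i<n1+n2. w i * ?nu (B i \<inter> E))
        = (\<Sum>i<n1. w1 i * ?nu (B1 i \<inter> E)) - (\<Sum>i<n2. w2 i * ?nu (B2 i \<inter> E))"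
      unfolding sum_lessThan_add by (simp add: w_def B_def sum_negf)
    moreover have "mu E = mp E - mn E" unfolding mp_def mn_def by simp
    ultimately show ?thesis using 1(2) 2(2) E unfolding abs_le_iff by fastforce
  qed
  moreover have "\<forall>i<n1+n2. B i \<in> M" using 1(1) 2(1) unfolding B_def by auto
  ultimately show ?thesis by blast
qed

end

section \<open>Transferring integrals along an approximate density\<close>

context algebra
begin

text \<open>If \<open>mu\<close> is uniformly \<open>d\<close>-close to \<open>\<Sum>\<^sub>i w\<^sub>i nu(B\<^sub>i \<inter> .)\<close>, then integrals of functions
  bounded by \<open>K\<close> are \<open>2Kd\<close>-close: first for simple functions, grouping by level sets, then for
  \<open>B(M)\<close> by approximation.\<close>
lemma transfer_simple:
  fixes n :: nat
  assumes mu: "mu \<in> ba M" and nu: "nu \<in> ba M" and BM: "\<And>i. i < n \<Longrightarrow> B i \<in> M"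
    and D: "\<And>E. E \<in> M \<Longrightarrow> \<bar>mu E - (\<Sum>i<n. w i * nu (B i \<inter> E))\<bar> \<le> d"
    and s: "simple_fn \<Omega> M s" and K: "\<And>x. x \<in> \<Omega> \<Longrightarrow> \<bar>s x\<bar> \<le> K" and K0: "0 \<le> K"
  shows "\<bar>sint \<Omega> mu s - (\<Sum>i<n. w i * sint \<Omega> nu (\<lambda>x. s x * indicator (B i) x))\<bar> \<le> K * (2 * d)"
proof -
  define Df where "Df E = mu E - (\<Sum>i<n. w i * nu (B i \<inter> E))" for E
  define L where "L c = {x\<in>\<Omega>. s x = c}" for c
  have faD: "fin_add M Df"
  proof -
    have "fin_add M (\<lambda>E. w i * nu (B i \<inter> E))" if "i \<in> {..<n}" for i
      using fin_add_restrict[OF ba_fin_add[OF nu] BM] that unfolding fin_add_def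
      by (simp add: distrib_left)
    then have "fin_add M (\<lambda>E. \<Sum>i<n. w i * nu (B i \<inter> E))"
      using fin_add_sum[of "{..<n}" "\<lambda>i E. w i * nu (B i \<inter> E)"] by simp
    then show ?thesis unfolding Df_def using fin_add_lin[OF ba_fin_add[OF mu], of _ 1 "-1"] by simp
  qed
  have "(\<Sum>i<n. w i * sint \<Omega> nu (\<lambda>x. s x * indicator (B i) x))
      = (\<Sum>i<n. w i * (\<Sum>c\<in>s ` \<Omega>. c * nu (B i \<inter> L c)))"
    using sint_indicator_mult[OF ba_fin_add[OF nu] s BM] unfolding L_def by (simp add: Int_commute)
  also have "\<dots> = (\<Sum>c\<in>s ` \<Omega>. c * (\<Sum>i<n. w i * nu (B i \<inter> L c)))"
    by (simp add: sum_distrib_left sum_distrib_right mult_ac sum.swap[of _ "{..<n}"])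
  finally have "sint \<Omega> mu s - (\<Sum>i<n. w i * sint \<Omega> nu (\<lambda>x. s x * indicator (B i) x))
      = (\<Sum>c\<in>s ` \<Omega>. c * Df (L c))"
    unfolding Df_def sint_def L_def by (simp add: right_diff_distrib sum_subtractf)
  also have "\<bar>\<dots>\<bar> \<le> (\<Sum>c\<in>s ` \<Omega>. \<bar>c * Df (L c)\<bar>)" by (rule sum_abs)
  also have "\<dots> \<le> (\<Sum>c\<in>s ` \<Omega>. K * \<bar>Df (L c)\<bar>)"
    using K by (intro sum_mono) (auto simp: abs_mult intro!: mult_right_mono)
  also have "\<dots> = K * (\<Sum>C\<in>L ` s ` \<Omega>. \<bar>Df C\<bar>)"
  proof -
    have "inj_on L (s ` \<Omega>)" unfolding L_def inj_on_def by auto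
    then show ?thesis by (simp add: sum.reindex sum_distrib_left)
  qed
  also have "\<dots> \<le> K * (2 * d)"
  proof -
    have "(\<Sum>C\<in>L ` s ` \<Omega>. \<bar>Df C\<bar>) \<le> 2 * d"
      by (rule fin_add_abs_sum_le[OF faD])
        (use D simple_finite[OF s] simple_level[OF s] in \<open>auto simp: Df_def L_def disjoint_def\<close>)
    then show ?thesis using K0 by (intro mult_left_mono)
  qed
  finally show ?thesis .
qed

lemma transfer:
  fixes n :: nat
  assumes mu: "mu \<in> ba M" and nu: "nu \<in> ba M" and BM: "\<And>i. i < n \<Longrightarrow> B i \<in> M"
    and D: "\<And>E. E \<in> M \<Longrightarrow> \<bar>mu E - (\<Sum>i<n. w i * nu (B i \<inter> E))\<bar> \<le> d"
    and u: "bfun \<Omega> M u" and K: "\<And>x. x \<in> \<Omega> \<Longrightarrow> \<bar>u x\<bar> \<le> K" and K0: "0 \<le> K"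
  shows "\<bar>fa_int \<Omega> M mu u - (\<Sum>i<n. w i * fa_int \<Omega> M nu (\<lambda>x. u x * indicator (B i) x))\<bar>
    \<le> K * (2 * d)"
proof -
  define Tm where "Tm = tv M mu \<Omega>"
  define Tn where "Tn = tv M nu \<Omega>"
  let ?uB = "\<lambda>i x. u x * indicator (B i) x"
  have d0: "0 \<le> d" using D[of "{}"] fin_add_empty[OF ba_fin_add[OF mu]] fin_add_empty[OF ba_fin_add[OF nu]]
    by simp
  have "\<bar>fa_int \<Omega> M mu u - (\<Sum>i<n. w i * fa_int \<Omega> M nu (?uB i))\<bar>
      \<le> K * (2 * d) + e * (Tm + (\<Sum>i<n. \<bar>w i\<bar>) * Tn + 2 * d)" if e: "e > 0" for e
  proof -
    obtain s where s: "simple_fn \<Omega> M s" "\<forall>x\<in>\<Omega>. \<bar>u x - s x\<bar> < e" using u e unfolding bfun_def by blast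
    let ?sB = "\<lambda>i x. s x * indicator (B i) x"
    have sK: "\<bar>s x\<bar> \<le> K + e" if "x \<in> \<Omega>" for x using s(2) K[OF that] that by force
    have 1: "\<bar>fa_int \<Omega> M mu u - sint \<Omega> mu s\<bar> \<le> e * Tm"
      using fa_int_approx[OF mu u s(1), of e] s(2) unfolding Tm_def by fastforce
    have 2: "\<bar>fa_int \<Omega> M nu (?uB i) - sint \<Omega> nu (?sB i)\<bar> \<le> e * Tn" if i: "i < n" for i
    proof (rule fa_int_approx[OF nu bfun_indicator[OF u BM[OF i]]
          simple_comb[OF s(1) simple_indicator[OF BM[OF i]]], folded Tn_def])
      fix x assume "x \<in> \<Omega>"
      then show "\<bar>u x * indicator (B i) x - s x * indicator (B i) x\<bar> \<le> e"
        using s(2) by (auto simp: indicator_def)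
    qed
    have 3: "\<bar>sint \<Omega> mu s - (\<Sum>i<n. w i * sint \<Omega> nu (?sB i))\<bar> \<le> (K + e) * (2 * d)"
      using transfer_simple[OF mu nu BM D s(1) sK] K0 e by simp
    have "\<bar>(\<Sum>i<n. w i * fa_int \<Omega> M nu (?uB i)) - (\<Sum>i<n. w i * sint \<Omega> nu (?sB i))\<bar>
        = \<bar>\<Sum>i<n. w i * (fa_int \<Omega> M nu (?uB i) - sint \<Omega> nu (?sB i))\<bar>"
      by (simp add: sum_subtractf right_diff_distrib)
    also have "\<dots> \<le> (\<Sum>i<n. \<bar>w i\<bar> * (e * Tn))"
      using 2 by (intro order_trans[OF sum_abs] sum_mono) (auto simp: abs_mult intro: mult_left_mono)
    finally have 4: "\<bar>(\<Sum>i<n. w i * fa_int \<Omega> M nu (?uB i)) - (\<Sum>i<n. w i * sint \<Omega> nu (?sB i))\<bar>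
        \<le> (\<Sum>i<n. \<bar>w i\<bar>) * (e * Tn)"
      by (simp add: sum_distrib_right)
    show ?thesis using 1 3 4 d0 e by (simp add: algebra_simps)
  qed
  then show ?thesis by (rule le_by_scaled_epsilon)
qed

end

section \<open>Absolute continuity and \<open>L\<^sup>1\<close> norms\<close>

context algebra
begin

lemma sint_chebyshev:
  assumes fa: "fin_add M nu" and nn: "\<And>A. A \<in> M \<Longrightarrow> 0 \<le> nu A" and d: "simple_fn \<Omega> M d"
  shows "t * nu {x\<in>\<Omega>. t < \<bar>d x\<bar>} \<le> sint \<Omega> nu (\<lambda>x. \<bar>d x\<bar>)"
proof -
  let ?U = "{x\<in>\<Omega>. t < \<bar>d x\<bar>}"
  have UM: "?U \<in> M" by (rule simple_superlevel[OF d])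
  have "t * nu ?U = sint \<Omega> nu (\<lambda>x. t * indicator ?U x)"
    using sint_cmult[OF fa simple_indicator[OF UM], of t] sint_indicator[OF fa UM] by simp
  also have "\<dots> \<le> sint \<Omega> nu (\<lambda>x. \<bar>d x\<bar>)"
    by (rule sint_mono[OF fa nn simple_map[OF simple_indicator[OF UM]] simple_map[OF d]])
      (auto simp: indicator_def less_imp_le)
  finally show ?thesis .
qed

lemma sint_abs_le_split:
  assumes fa: "fin_add M tau" and nn: "\<And>A. A \<in> M \<Longrightarrow> 0 \<le> tau A" and d: "simple_fn \<Omega> M d"
    and dC: "\<And>x. x \<in> \<Omega> \<Longrightarrow> \<bar>d x\<bar> \<le> C" and C: "0 \<le> C" and t: "0 \<le> t"
  shows "sint \<Omega> tau (\<lambda>x. \<bar>d x\<bar>) \<le> t * tau \<Omega> + C * tau {x\<in>\<Omega>. t < \<bar>d x\<bar>}"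
proof -
  let ?U = "{x\<in>\<Omega>. t < \<bar>d x\<bar>}"
  have UM: "?U \<in> M" by (rule simple_superlevel[OF d])
  have s2: "simple_fn \<Omega> M (\<lambda>x. C * indicator ?U x)" by (rule simple_map[OF simple_indicator[OF UM]])
  have "sint \<Omega> tau (\<lambda>x. \<bar>d x\<bar>) \<le> sint \<Omega> tau (\<lambda>x. t + C * indicator ?U x)"
  proof (rule sint_mono[OF fa nn simple_map[OF d] simple_comb[OF simple_const s2]])
    fix x assume x: "x \<in> \<Omega>"
    show "\<bar>d x\<bar> \<le> t + C * indicator ?U x"
    proof (cases "t < \<bar>d x\<bar>")
      case True then show ?thesis using dC[OF x] t x by (simp add: indicator_def)
    next
      case False then show ?thesis using x by (simp add: indicator_def)
    qed
  qed
  also have "\<dots> = t * tau \<Omega> + C * tau ?U"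
    using sint_add[OF fa simple_const s2, of t] sint_const[OF fa, of t]
      sint_cmult[OF fa simple_indicator[OF UM], of C] sint_indicator[OF fa UM]
    by (simp add: mult.commute)
  finally show ?thesis .
qed

lemma l1_absolutely_continuous:
  assumes lam: "lam \<in> ba M" and mu: "mu \<in> ba_ac M lam" and eps: "\<epsilon> > 0" and C: "C \<ge> 0"
  shows "\<exists>\<eta>>0. \<forall>d. simple_fn \<Omega> M d \<and> (\<forall>x\<in>\<Omega>. \<bar>d x\<bar> \<le> C)
    \<and> sint \<Omega> (tv M lam) (\<lambda>x. \<bar>d x\<bar>) \<le> \<eta> \<longrightarrow> sint \<Omega> (tv M mu) (\<lambda>x. \<bar>d x\<bar>) \<le> \<epsilon>"
proof -
  have mub: "mu \<in> ba M" using mu unfolding ba_ac_def by auto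
  let ?nu = "tv M lam" and ?tau = "tv M mu"
  define T where "T = ?tau \<Omega>"
  have T: "0 \<le> T" unfolding T_def using tv_space_nonneg[OF mub] .
  define t where "t = (\<epsilon>/2) / (T + 1)"
  define e' where "e' = (\<epsilon>/2) / (C + 1)"
  have t: "t > 0" unfolding t_def using eps T by simp
  have e': "e' > 0" unfolding e'_def using eps C by simp
  obtain \<delta> where \<delta>: "\<delta> > 0" "\<forall>A\<in>M. ?nu A < \<delta> \<longrightarrow> ?tau A < e'"
    using mu e' unfolding ba_ac_def by blast
  have "sint \<Omega> ?tau (\<lambda>x. \<bar>d x\<bar>) \<le> \<epsilon>"
    if d: "simple_fn \<Omega> M d" and dC: "\<forall>x\<in>\<Omega>. \<bar>d x\<bar> \<le> C"
      and dn: "sint \<Omega> ?nu (\<lambda>x. \<bar>d x\<bar>) \<le> t * \<delta> / 2" for d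
  proof -
    let ?U = "{x\<in>\<Omega>. t < \<bar>d x\<bar>}"
    have UM: "?U \<in> M" by (rule simple_superlevel[OF d])
    have "t * ?nu ?U \<le> t * \<delta> / 2"
      using sint_chebyshev[OF tv_fin_add[OF lam] tv_nonneg[OF lam] d, of t] dn by simp
    then have "?nu ?U < \<delta>" using t \<delta>(1) by (simp add: field_simps)
    then have tU: "?tau ?U < e'" using \<delta>(2) UM by auto
    have "sint \<Omega> ?tau (\<lambda>x. \<bar>d x\<bar>) \<le> t * T + C * ?tau ?U"
      unfolding T_def using dC by (intro sint_abs_le_split[OF tv_fin_add[OF mub] tv_nonneg[OF mub] d _ C]) (use t in auto)
    also have "\<dots> \<le> \<epsilon>/2 + \<epsilon>/2"
    proof (rule add_mono)
      show "t * T \<le> \<epsilon>/2" unfolding t_def using fraction_lt[of "\<epsilon>/2" T] eps T by (simp add: mult.commute)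
      have "C * ?tau ?U \<le> C * e'" using tU C by (intro mult_left_mono) auto
      also have "\<dots> \<le> \<epsilon>/2" unfolding e'_def using fraction_lt[of "\<epsilon>/2" C] eps C by (simp add: mult.commute)
      finally show "C * ?tau ?U \<le> \<epsilon>/2" .
    qed
    finally show ?thesis by simp
  qed
  moreover have "t * \<delta> / 2 > 0" using t \<delta> by simp
  ultimately show ?thesis by blast
qed

end

section \<open>Banach limits\<close>

lemma banach_limit_add:
  "banach_limit ord L \<Longrightarrow> bounded_net x \<Longrightarrow> bounded_net y \<Longrightarrow> L (\<lambda>a. x a + y a) = L x + L y"
  unfolding banach_limit_def by blast

lemma banach_limit_mult: "banach_limit ord L \<Longrightarrow> bounded_net x \<Longrightarrow> L (\<lambda>a. c * x a) = c * L x"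
  unfolding banach_limit_def by blast

lemma banach_limit_bound: "banach_limit ord L \<Longrightarrow> (\<And>a. \<bar>x a\<bar> \<le> c) \<Longrightarrow> \<bar>L x\<bar> \<le> c"
  unfolding banach_limit_def by blast

lemma banach_limit_tendsto:
  "banach_limit ord L \<Longrightarrow> bounded_net x \<Longrightarrow> net_tendsto ord x l \<Longrightarrow> L x = l"
  unfolding banach_limit_def by blast

lemma bounded_net_lin:
  assumes "bounded_net x" "bounded_net y"
  shows "bounded_net (\<lambda>a. p * x a + q * y a)"
proof -
  obtain c d where c: "\<And>a. \<bar>x a\<bar> \<le> c" and d: "\<And>a. \<bar>y a\<bar> \<le> d"
    using assms unfolding bounded_net_def by auto
  have "\<bar>p * x a + q * y a\<bar> \<le> \<bar>p\<bar> * c + \<bar>q\<bar> * d" for a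
    using abs_triangle_ineq[of "p * x a" "q * y a"] c[of a] d[of a]
      mult_left_mono[of "\<bar>x a\<bar>" c "\<bar>p\<bar>"] mult_left_mono[of "\<bar>y a\<bar>" d "\<bar>q\<bar>"]
    by (simp add: abs_mult)
  then show ?thesis unfolding bounded_net_def by blast
qed

lemma banach_limit_diff_bound:
  assumes L: "banach_limit ord L" and x: "bounded_net x" and y: "bounded_net y"
    and xy: "\<And>a. \<bar>x a - y a\<bar> \<le> c"
  shows "\<bar>L x - L y\<bar> \<le> c"
proof -
  have "L (\<lambda>a. 1 * x a + (-1) * y a) = L x - L y"
    using banach_limit_add[OF L x bounded_net_lin[OF y y, of "-1" 0]] banach_limit_mult[OF L y, of "-1"]
    by simp
  moreover have "\<bar>L (\<lambda>a. 1 * x a + (-1) * y a)\<bar> \<le> c"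
    by (rule banach_limit_bound[OF L]) (use xy in simp)
  ultimately show ?thesis by simp
qed

lemma banach_limit_sum:
  fixes X :: "nat \<Rightarrow> 'i \<Rightarrow> real"
  assumes L: "banach_limit ord L" and X: "\<And>i. i < n \<Longrightarrow> bounded_net (X i)"
  shows "bounded_net (\<lambda>a. \<Sum>i<n. w i * X i a) \<and> L (\<lambda>a. \<Sum>i<n. w i * X i a) = (\<Sum>i<n. w i * L (X i))"
  using X
proof (induction n)
  case 0
  have b0: "bounded_net (\<lambda>a. 0::real)" unfolding bounded_net_def by auto
  then show ?case using banach_limit_mult[OF L b0, of 0] by simp
next
  case (Suc n)
  then have IH: "bounded_net (\<lambda>a. \<Sum>i<n. w i * X i a)"
      "L (\<lambda>a. \<Sum>i<n. w i * X i a) = (\<Sum>i<n. w i * L (X i))"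
    and Xn: "bounded_net (X n)" by auto
  have "L (\<lambda>a. \<Sum>i<Suc n. w i * X i a) = L (\<lambda>a. (\<Sum>i<n. w i * X i a) + w n * X n a)" by simp
  also have "\<dots> = (\<Sum>i<n. w i * L (X i)) + w n * L (X n)"
    using banach_limit_add[OF L IH(1) bounded_net_lin[OF Xn Xn, of "w n" 0]]
      banach_limit_mult[OF L Xn] IH(2) by simp
  finally show ?case using bounded_net_lin[OF IH(1) Xn, of 1 "w n"] by simp
qed

section \<open>The limit set function \<open>Phi\<close> and approximating sequences\<close>

locale net_setting = algebra +
  fixes lam :: "'a set \<Rightarrow> real" and ord :: "'i \<Rightarrow> 'i \<Rightarrow> bool" and L :: "('i \<Rightarrow> real) \<Rightarrow> real"
    and h :: "'i \<Rightarrow> 'a \<Rightarrow> real" and c :: real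
  assumes lam: "lam \<in> ba M" and L: "banach_limit ord L"
    and h_bfun: "\<And>a. bfun \<Omega> M (h a)" and h_bound: "\<And>a x. x \<in> \<Omega> \<Longrightarrow> \<bar>h a x\<bar> \<le> c"
    and c_nonneg: "0 \<le> c"
begin

abbreviation nu :: "'a set \<Rightarrow> real" where "nu \<equiv> tv M lam"

lemma nu_ba: "nu \<in> ba M" by (rule tv_ba[OF lam])
lemma nu_nonneg: "A \<in> M \<Longrightarrow> 0 \<le> nu A" by (rule tv_nonneg[OF lam])
lemma nu_fin_add: "fin_add M nu" by (rule tv_fin_add[OF lam])

definition net_integral :: "'a set \<Rightarrow> 'i \<Rightarrow> real" where
  "net_integral E a = fa_int \<Omega> M nu (\<lambda>x. h a x * indicator E x)"

definition Phi :: "'a set \<Rightarrow> real" where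
  "Phi E = L (net_integral E)"

lemma net_integral_bound: "E \<in> M \<Longrightarrow> \<bar>net_integral E a\<bar> \<le> c * nu E"
  unfolding net_integral_def by (rule fa_int_indicator_bound[OF nu_ba nu_nonneg h_bfun h_bound])

lemma net_integral_bounded_net: "E \<in> M \<Longrightarrow> bounded_net (net_integral E)"
  unfolding bounded_net_def using net_integral_bound by blast

lemma Phi_bound: "E \<in> M \<Longrightarrow> \<bar>Phi E\<bar> \<le> c * nu E"
  unfolding Phi_def by (rule banach_limit_bound[OF L net_integral_bound])

lemma Phi_fin_add: "fin_add M Phi"
  unfolding fin_add_def
proof (intro ballI impI)
  fix A B assume A: "A \<in> M" and B: "B \<in> M" and AB: "A \<inter> B = {}"
  have "net_integral (A \<union> B) a = net_integral A a + net_integral B a" for a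
  proof -
    have "(\<lambda>x. h a x * indicator (A \<union> B) x)
        = (\<lambda>x. 1 * (h a x * indicator A x) + 1 * (h a x * indicator B x))"
      using AB by (auto simp: fun_eq_iff indicator_def)
    then show ?thesis unfolding net_integral_def
      using fa_int_lin[OF nu_ba bfun_indicator[OF h_bfun[of a] A] bfun_indicator[OF h_bfun[of a] B], of 1 1]
      by simp
  qed
  then have "net_integral (A \<union> B) = (\<lambda>a. net_integral A a + net_integral B a)" by auto
  then show "Phi (A \<union> B) = Phi A + Phi B"
    unfolding Phi_def using banach_limit_add[OF L net_integral_bounded_net[OF A] net_integral_bounded_net[OF B]]
    by simp
qed

definition represents :: "(nat \<Rightarrow> 'a \<Rightarrow> real) \<Rightarrow> bool" where
  "represents f \<longleftrightarrow> (\<forall>n. simple_fn \<Omega> M (f n)) \<and> (\<exists>c. \<forall>n. \<forall>x\<in>\<Omega>. \<bar>f n x\<bar> \<le> c)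
     \<and> (\<forall>mu\<in>ba_ac M lam. l1_cauchy \<Omega> M mu f)
     \<and> (\<forall>A\<in>M. \<forall>mu\<in>ba_ac M lam.
          (\<lambda>n. fa_int \<Omega> M mu (\<lambda>x. f n x * indicator A x))
            \<longlonglongrightarrow> L (\<lambda>a. fa_int \<Omega> M mu (\<lambda>x. h a x * indicator A x)))"

definition Phi_approximation :: "(nat \<Rightarrow> 'a \<Rightarrow> real) \<Rightarrow> real \<Rightarrow> (nat \<Rightarrow> real) \<Rightarrow> bool" where
  "Phi_approximation f K e \<longleftrightarrow> (\<forall>n. simple_fn \<Omega> M (f n)) \<and> 0 \<le> K
     \<and> (\<forall>n. \<forall>x\<in>\<Omega>. \<bar>f n x\<bar> \<le> K) \<and> e \<longlonglongrightarrow> 0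
     \<and> (\<forall>n. \<forall>E\<in>M. \<bar>sint \<Omega> nu (\<lambda>x. f n x * indicator E x) - Phi E\<bar> \<le> e n)"

lemma Phi_approximationD:
  assumes "Phi_approximation f K e"
  shows "\<And>n. simple_fn \<Omega> M (f n)" "0 \<le> K" "\<And>n x. x \<in> \<Omega> \<Longrightarrow> \<bar>f n x\<bar> \<le> K" "e \<longlonglongrightarrow> 0"
    "\<And>n E. E \<in> M \<Longrightarrow> \<bar>sint \<Omega> nu (\<lambda>x. f n x * indicator E x) - Phi E\<bar> \<le> e n"
  using assms unfolding Phi_approximation_def by auto

lemma eventually_le_of_tendsto_0:
  "e \<longlonglongrightarrow> 0 \<Longrightarrow> r > 0 \<Longrightarrow> \<exists>N. \<forall>n\<ge>N. e n \<le> (r::real)"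
  using LIMSEQ_D[of e 0 r] by (force simp: abs_less_iff)

lemma approximation_l1_close:
  assumes f: "Phi_approximation f K e"
  shows "sint \<Omega> nu (\<lambda>x. \<bar>f n x - f m x\<bar>) \<le> 2 * (e n + e m)"
proof (rule sint_abs_le_twice_sup[OF nu_fin_add nu_nonneg])
  note f = Phi_approximationD[OF f]
  show "simple_fn \<Omega> M (\<lambda>x. f n x - f m x)" by (rule simple_comb[OF f(1) f(1)])
  fix E assume E: "E \<in> M"
  have "(\<lambda>x. (f n x - f m x) * indicator E x) = (\<lambda>x. f n x * indicator E x - f m x * indicator E x)"
    by (auto simp: fun_eq_iff algebra_simps)
  then have "sint \<Omega> nu (\<lambda>x. (f n x - f m x) * indicator E x)
      = sint \<Omega> nu (\<lambda>x. f n x * indicator E x) - sint \<Omega> nu (\<lambda>x. f m x * indicator E x)"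
    using sint_diff[OF nu_fin_add simple_comb[OF f(1) simple_indicator[OF E]]
        simple_comb[OF f(1) simple_indicator[OF E]]] by simp
  then show "\<bar>sint \<Omega> nu (\<lambda>x. (f n x - f m x) * indicator E x)\<bar> \<le> e n + e m"
    using f(5)[OF E, of n] f(5)[OF E, of m] by (simp add: abs_le_iff)
qed

lemma approximation_l1_cauchy:
  assumes f: "Phi_approximation f K e" and mu: "mu \<in> ba_ac M lam"
  shows "l1_cauchy \<Omega> M mu f"
  unfolding l1_cauchy_def
proof (intro allI impI)
  fix \<epsilon> :: real assume eps: "\<epsilon> > 0"
  note fD = Phi_approximationD[OF f]
  obtain \<eta> where \<eta>: "\<eta> > 0" "\<forall>d. simple_fn \<Omega> M d \<and> (\<forall>x\<in>\<Omega>. \<bar>d x\<bar> \<le> 2 * K)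
      \<and> sint \<Omega> nu (\<lambda>x. \<bar>d x\<bar>) \<le> \<eta> \<longrightarrow> sint \<Omega> (tv M mu) (\<lambda>x. \<bar>d x\<bar>) \<le> \<epsilon>"
    using l1_absolutely_continuous[OF lam mu eps, of "2 * K"] fD(2) by auto
  obtain N where N: "\<forall>n\<ge>N. e n \<le> \<eta>/4" using eventually_le_of_tendsto_0[OF fD(4), of "\<eta>/4"] \<eta>(1) by auto
  have "sint \<Omega> (tv M mu) (\<lambda>x. \<bar>f (n + p) x - f (n + q) x\<bar>) \<le> \<epsilon>" if n: "n \<ge> N" for n p q
  proof -
    have bnd: "\<bar>f (n + p) x - f (n + q) x\<bar> \<le> 2 * K" if x: "x \<in> \<Omega>" for x
      using fD(3)[OF x, of "n+p"] fD(3)[OF x, of "n+q"] by linarith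
    have "e (n + p) \<le> \<eta>/4" "e (n + q) \<le> \<eta>/4" using N n by auto
    have "sint \<Omega> nu (\<lambda>x. \<bar>f (n + p) x - f (n + q) x\<bar>) \<le> 2 * (e (n + p) + e (n + q))"
      by (rule approximation_l1_close[OF f])
    also have "\<dots> \<le> \<eta>" using \<open>e (n + p) \<le> \<eta>/4\<close> \<open>e (n + q) \<le> \<eta>/4\<close> by simp
    finally have "sint \<Omega> nu (\<lambda>x. \<bar>f (n + p) x - f (n + q) x\<bar>) \<le> \<eta>" .
    then show ?thesis using \<eta>(2) simple_comb[OF fD(1) fD(1)] bnd by blast
  qed
  then show "\<exists>N. \<forall>n\<ge>N. \<forall>p q. sint \<Omega> (tv M mu) (\<lambda>x. \<bar>f (n + p) x - f (n + q) x\<bar>) \<le> \<epsilon>" by blast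
qed

lemma limit_transfer:
  fixes n :: nat
  assumes mu: "mu \<in> ba M" and BM: "\<And>i. i < n \<Longrightarrow> B i \<in> M"
    and D: "\<And>E. E \<in> M \<Longrightarrow> \<bar>mu E - (\<Sum>i<n. w i * nu (B i \<inter> E))\<bar> \<le> d" and A: "A \<in> M"
  shows "\<bar>L (\<lambda>a. fa_int \<Omega> M mu (\<lambda>x. h a x * indicator A x)) - (\<Sum>i<n. w i * Phi (A \<inter> B i))\<bar>
    \<le> c * (2 * d)"
proof -
  define Y where "Y a = fa_int \<Omega> M mu (\<lambda>x. h a x * indicator A x)" for a
  define Z where "Z a = (\<Sum>i<n. w i * net_integral (A \<inter> B i) a)" for a
  have "\<bar>Y a - Z a\<bar> \<le> c * (2 * d)" for a
  proof -
    have "(\<lambda>x. h a x * indicator A x * indicator (B i) x) = (\<lambda>x. h a x * indicator (A \<inter> B i) x)" for i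
      by (auto simp: fun_eq_iff indicator_def)
    then show ?thesis
      using transfer[OF mu nu_ba BM D bfun_indicator[OF h_bfun[of a] A], of c] c_nonneg h_bound
      unfolding Y_def Z_def net_integral_def by (auto simp: indicator_def abs_mult)
  qed
  moreover have "bounded_net Y"
  proof -
    have "\<bar>Y a\<bar> \<le> c * tv M mu \<Omega>" for a
      unfolding Y_def by (rule fa_int_bound[OF mu bfun_indicator[OF h_bfun A]])
        (use h_bound c_nonneg in \<open>auto simp: indicator_def\<close>)
    then show ?thesis unfolding bounded_net_def by blast
  qed
  moreover have "bounded_net Z \<and> L Z = (\<Sum>i<n. w i * Phi (A \<inter> B i))"
    using banach_limit_sum[OF L net_integral_bounded_net, of n "\<lambda>i. A \<inter> B i" w] A BM
    unfolding Z_def[abs_def] Phi_def by auto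
  ultimately show ?thesis
    using banach_limit_diff_bound[OF L] unfolding Y_def[symmetric] by metis
qed

lemma approximation_transfer:
  fixes n0 :: nat
  assumes f: "Phi_approximation f K e" and mu: "mu \<in> ba M" and BM: "\<And>i. i < n0 \<Longrightarrow> B i \<in> M"
    and D: "\<And>E. E \<in> M \<Longrightarrow> \<bar>mu E - (\<Sum>i<n0. w i * nu (B i \<inter> E))\<bar> \<le> d" and A: "A \<in> M"
  shows "\<bar>fa_int \<Omega> M mu (\<lambda>x. f n x * indicator A x) - (\<Sum>i<n0. w i * Phi (A \<inter> B i))\<bar>
    \<le> K * (2 * d) + (\<Sum>i<n0. \<bar>w i\<bar>) * e n"
proof -
  note fD = Phi_approximationD[OF f]
  have fA: "simple_fn \<Omega> M (\<lambda>x. f n x * indicator A x)" by (rule simple_comb[OF fD(1) simple_indicator[OF A]])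
  have ind: "(\<lambda>x. f n x * indicator A x * indicator (B i) x) = (\<lambda>x. f n x * indicator (A \<inter> B i) x)" for i
    by (auto simp: fun_eq_iff indicator_def)
  have fAB: "fa_int \<Omega> M nu (\<lambda>x. f n x * indicator A x * indicator (B i) x)
      = sint \<Omega> nu (\<lambda>x. f n x * indicator (A \<inter> B i) x)" if "i < n0" for i
    unfolding ind using fa_int_simple[OF nu_ba simple_comb[OF fD(1) simple_indicator]] A BM that by blast
  have 1: "\<bar>fa_int \<Omega> M mu (\<lambda>x. f n x * indicator A x)
      - (\<Sum>i<n0. w i * sint \<Omega> nu (\<lambda>x. f n x * indicator (A \<inter> B i) x))\<bar> \<le> K * (2 * d)"
    using transfer[OF mu nu_ba BM D bfun_simple[OF fA], of K] fD(2,3) fAB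
    by (simp add: indicator_def abs_mult)
  have "\<bar>(\<Sum>i<n0. w i * sint \<Omega> nu (\<lambda>x. f n x * indicator (A \<inter> B i) x)) - (\<Sum>i<n0. w i * Phi (A \<inter> B i))\<bar>
      = \<bar>\<Sum>i<n0. w i * (sint \<Omega> nu (\<lambda>x. f n x * indicator (A \<inter> B i) x) - Phi (A \<inter> B i))\<bar>"
    by (simp add: sum_subtractf right_diff_distrib)
  also have "\<dots> \<le> (\<Sum>i<n0. \<bar>w i\<bar> * e n)"
  proof (rule order_trans[OF sum_abs sum_mono])
    fix i assume "i \<in> {..<n0}"
    then have "A \<inter> B i \<in> M" using A BM by auto
    then show "\<bar>w i * (sint \<Omega> nu (\<lambda>x. f n x * indicator (A \<inter> B i) x) - Phi (A \<inter> B i))\<bar>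
        \<le> \<bar>w i\<bar> * e n"
      using fD(5) by (simp add: abs_mult mult_left_mono)
  qed
  finally show ?thesis using 1 by (simp add: sum_distrib_right abs_le_iff)
qed

text \<open>Combining both transfers with the approximate Radon-Nikodym theorem.\<close>
lemma approximation_tendsto:
  assumes f: "Phi_approximation f K e" and mu: "mu \<in> ba_ac M lam" and A: "A \<in> M"
  shows "(\<lambda>n. fa_int \<Omega> M mu (\<lambda>x. f n x * indicator A x))
    \<longlonglongrightarrow> L (\<lambda>a. fa_int \<Omega> M mu (\<lambda>x. h a x * indicator A x))"
proof (rule LIMSEQ_I)
  fix r :: real assume r: "r > 0"
  note fD = Phi_approximationD[OF f]
  have mub: "mu \<in> ba M" using mu unfolding ba_ac_def by auto
  define d where "d = r / (4 * (c + K + 1))"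
  have d: "d > 0" unfolding d_def using r c_nonneg fD(2) by simp
  obtain n0 :: nat and w B where BM: "\<forall>i<n0. B i \<in> M"
    and D: "\<forall>E\<in>M. \<bar>mu E - (\<Sum>i<n0. w i * nu (B i \<inter> E))\<bar> \<le> d"
    using combination_approx[OF lam mu d] by blast
  define W where "W = (\<Sum>i<n0. \<bar>w i\<bar>)"
  have W: "0 \<le> W" unfolding W_def by (simp add: sum_nonneg)
  obtain N where N: "\<forall>n\<ge>N. e n \<le> r / (4 * (W + 1))"
    using eventually_le_of_tendsto_0[OF fD(4), of "r / (4 * (W + 1))"] r W by auto
  have cd: "(K + c) * (2 * d) \<le> r / 2"
    using fraction_lt[of "r/2" "c + K"] r c_nonneg fD(2) unfolding d_def by (simp add: field_simps)
  have "\<bar>fa_int \<Omega> M mu (\<lambda>x. f n x * indicator A x) - L (\<lambda>a. fa_int \<Omega> M mu (\<lambda>x. h a x * indicator A x))\<bar> < r"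
    if n: "n \<ge> N" for n
  proof -
    have "W * e n \<le> W * (r / 4 / (W + 1))" using N n W by (intro mult_left_mono) auto
    also have "\<dots> < r / 4" by (rule fraction_lt) (use r W in auto)
    finally have "W * e n < r / 2" using r by linarith
    then show ?thesis
      using approximation_transfer[OF f mub, of n0 B w d A n] limit_transfer[OF mub, of n0 B w d A]
        BM D A cd unfolding W_def by (auto simp: abs_le_iff algebra_simps)
  qed
  then show "\<exists>no. \<forall>n\<ge>no. norm (fa_int \<Omega> M mu (\<lambda>x. f n x * indicator A x)
      - L (\<lambda>a. fa_int \<Omega> M mu (\<lambda>x. h a x * indicator A x))) < r" by auto
qed

theorem approximation_represents: "Phi_approximation f K e \<Longrightarrow> represents f"
  unfolding represents_def using approximation_l1_cauchy approximation_tendsto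
  by (auto simp: Phi_approximation_def)

end

section \<open>The two constructions\<close>

context net_setting
begin

lemma step_density_ratio_bound: "B \<in> M \<Longrightarrow> \<bar>Phi B / nu B\<bar> \<le> c"
  using Phi_bound[of B] nu_nonneg[of B] c_nonneg
  by (cases "nu B = 0") (auto simp: abs_divide pos_divide_le_eq mult.commute)

lemma step_density_sequence: "\<exists>f. Phi_approximation f c (\<lambda>k. inverse (real (Suc k)))"
proof -
  have "\<forall>k. \<exists>(m::nat) B. finite_partition {..<m} B
      \<and> (\<forall>A\<in>M. \<bar>Phi A - (\<Sum>i<m. Phi (B i) / nu (B i) * nu (B i \<inter> A))\<bar> \<le> inverse (real (Suc k)))"
    using step_density_approx[OF Phi_fin_add nu_fin_add nu_nonneg Phi_bound] by simp
  then obtain m :: "nat \<Rightarrow> nat" where "\<forall>k. \<exists>B. finite_partition {..<m k} B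
      \<and> (\<forall>A\<in>M. \<bar>Phi A - (\<Sum>i<m k. Phi (B i) / nu (B i) * nu (B i \<inter> A))\<bar> \<le> inverse (real (Suc k)))"
    by (rule choice_iff[THEN iffD1, elim_format]) blast
  then obtain B where "\<forall>k. finite_partition {..<m k} (B k)
      \<and> (\<forall>A\<in>M. \<bar>Phi A - (\<Sum>i<m k. Phi (B k i) / nu (B k i) * nu (B k i \<inter> A))\<bar> \<le> inverse (real (Suc k)))"
    by (rule choice_iff[THEN iffD1, elim_format]) blast
  then have P: "\<And>k. finite_partition {..<m k} (B k)"
    and approx: "\<And>k A. A \<in> M
      \<Longrightarrow> \<bar>Phi A - (\<Sum>i<m k. Phi (B k i) / nu (B k i) * nu (B k i \<inter> A))\<bar> \<le> inverse (real (Suc k))"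
    by auto
  define f where "f k = step_fn {..<m k} (\<lambda>i. Phi (B k i) / nu (B k i)) (B k)" for k
  have "\<bar>f k x\<bar> \<le> c" if x: "x \<in> \<Omega>" for k x
  proof -
    obtain j where "j \<in> {..<m k}" "f k x = Phi (B k j) / nu (B k j)"
      using step_fn_range[OF P x] unfolding f_def by blast
    then show ?thesis using finite_partitionD(2)[OF P] step_density_ratio_bound by auto
  qed
  moreover have "\<bar>sint \<Omega> nu (\<lambda>x. f k x * indicator E x) - Phi E\<bar> \<le> inverse (real (Suc k))"
    if "E \<in> M" for k E
    using approx[OF that, of k] sint_step_fn_indicator[OF nu_fin_add P that] unfolding f_def
    by (simp add: abs_minus_commute)
  ultimately have "Phi_approximation f c (\<lambda>k. inverse (real (Suc k)))"
    unfolding Phi_approximation_def f_def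
    using simple_step_fn[OF P] c_nonneg LIMSEQ_inverse_real_of_nat by auto
  then show ?thesis by blast
qed

end

lemma directed_increasing_above:
  assumes dir: "directed ord"
  obtains aa :: "nat \<Rightarrow> 'i" where "\<And>m n. m \<le> n \<Longrightarrow> ord (aa m) (aa n)" "\<And>n. ord (bs n) (aa n)"
proof -
  have refl: "ord a a" and trans: "ord a b \<Longrightarrow> ord b d \<Longrightarrow> ord a d" and up: "\<exists>d. ord a d \<and> ord b d"
    for a b d using dir unfolding directed_def by blast+
  define aa where "aa = rec_nat (bs 0) (\<lambda>n an. SOME d. ord an d \<and> ord (bs (Suc n)) d)"
  have step: "ord (aa n) (aa (Suc n)) \<and> ord (bs (Suc n)) (aa (Suc n))" for n
    unfolding aa_def using someI_ex[OF up] by simp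
  have "ord (aa m) (aa n)" if "m \<le> n" for m n
    using that by (induction n rule: dec_induct) (use refl step trans in blast)+
  moreover have "ord (bs n) (aa n)" for n
    by (cases n) (use refl step in \<open>auto simp: aa_def\<close>)
  ultimately show ?thesis using that by blast
qed

definition running_max :: "(nat \<Rightarrow> 'a \<Rightarrow> real) \<Rightarrow> nat \<Rightarrow> 'a \<Rightarrow> real" where
  "running_max g n x = Max ((\<lambda>m. g m x) ` {..n})"

lemma running_max_0: "running_max g 0 x = g 0 x"
  unfolding running_max_def by simp

lemma running_max_Suc: "running_max g (Suc n) x = max (running_max g n x) (g (Suc n) x)"
  unfolding running_max_def atMost_Suc image_insert
  by (subst Max_insert) (auto simp: max.commute)

lemma running_max_ge: "g n x \<le> running_max g n x"
  unfolding running_max_def by (rule Max_ge) auto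

lemma running_max_attained: "\<exists>m\<le>n. running_max g n x = g m x"
proof -
  have "running_max g n x \<in> (\<lambda>m. g m x) ` {..n}"
    unfolding running_max_def by (rule Max_in) auto
  then show ?thesis by auto
qed

lemma (in algebra) simple_running_max:
  assumes "\<And>n. simple_fn \<Omega> M (g n)"
  shows "simple_fn \<Omega> M (running_max g n)"
proof (induction n)
  case 0
  then show ?case using assms by (simp add: running_max_0[abs_def])
next
  case (Suc n)
  then show ?case using simple_comb[OF Suc assms[of "Suc n"], of max] by (simp add: running_max_Suc[abs_def])
qed

locale monotone_net_setting = net_setting +
  assumes directed: "directed ord"
    and h_mono: "\<And>a b x. ord a b \<Longrightarrow> x \<in> \<Omega> \<Longrightarrow> h a x \<le> h b x"
begin

lemma net_integral_mono: "ord a b \<Longrightarrow> E \<in> M \<Longrightarrow> net_integral E a \<le> net_integral E b"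
  unfolding net_integral_def
  by (rule fa_int_mono[OF nu_ba nu_nonneg bfun_indicator[OF h_bfun] bfun_indicator[OF h_bfun]])
    (use h_mono in \<open>auto simp: indicator_def\<close>)

lemma net_integral_increment_le:
  assumes ab: "ord a b" and E: "E \<in> M"
  shows "net_integral E b - net_integral E a \<le> net_integral \<Omega> b - net_integral \<Omega> a"
proof -
  have bf: "bfun \<Omega> M (\<lambda>x. h b x * indicator A x)" "bfun \<Omega> M (\<lambda>x. h a x * indicator A x)"
    if "A \<in> M" for A using bfun_indicator[OF h_bfun that] by auto
  have "net_integral E b - net_integral E a = fa_int \<Omega> M nu (\<lambda>x. h b x * indicator E x - h a x * indicator E x)"
    unfolding net_integral_def by (rule fa_int_diff[OF nu_ba bf[OF E], symmetric])
  also have "\<dots> \<le> fa_int \<Omega> M nu (\<lambda>x. h b x * indicator \<Omega> x - h a x * indicator \<Omega> x)"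
    by (rule fa_int_mono[OF nu_ba nu_nonneg bfun_diff[OF bf[OF E]] bfun_diff[OF bf[OF top]]])
      (use h_mono[OF ab] in \<open>auto simp: indicator_def\<close>)
  also have "\<dots> = net_integral \<Omega> b - net_integral \<Omega> a"
    unfolding net_integral_def by (rule fa_int_diff[OF nu_ba bf[OF top]])
  finally show ?thesis .
qed

lemma Phi_eq_Sup:
  assumes E: "E \<in> M"
  shows "Phi E = Sup (range (net_integral E))" and "bdd_above (range (net_integral E))"
proof -
  show bdd: "bdd_above (range (net_integral E))"
    using net_integral_bound[OF E] unfolding bdd_above_def by (auto simp: abs_le_iff)
  have "net_tendsto ord (net_integral E) (Sup (range (net_integral E)))"
    unfolding net_tendsto_def
  proof (intro allI impI)
    fix \<epsilon> :: real assume "\<epsilon> > 0"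
    then obtain a0 where a0: "Sup (range (net_integral E)) - \<epsilon> < net_integral E a0"
      using less_cSup_iff[OF _ bdd, of "Sup (range (net_integral E)) - \<epsilon>"] by auto
    have "\<bar>net_integral E a - Sup (range (net_integral E))\<bar> < \<epsilon>" if "ord a0 a" for a
      using a0 net_integral_mono[OF that E] cSup_upper[OF _ bdd, of "net_integral E a"] by auto
    then show "\<exists>a0. \<forall>a. ord a0 a \<longrightarrow> \<bar>net_integral E a - Sup (range (net_integral E))\<bar> < \<epsilon>" by blast
  qed
  then show "Phi E = Sup (range (net_integral E))"
    unfolding Phi_def by (rule banach_limit_tendsto[OF L net_integral_bounded_net[OF E]])
qed

lemma Phi_le_hint_plus_deficit:
  assumes E: "E \<in> M"
  shows "Phi E \<le> net_integral E a + (Phi \<Omega> - net_integral \<Omega> a)"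
  unfolding Phi_eq_Sup(1)[OF E]
proof (rule cSup_least)
  fix y assume "y \<in> range (net_integral E)"
  then obtain b where y: "y = net_integral E b" by auto
  obtain d where d: "ord a d" "ord b d" using directed unfolding directed_def by blast
  have "net_integral \<Omega> d \<le> Phi \<Omega>"
    unfolding Phi_eq_Sup(1)[OF top] by (rule cSup_upper[OF _ Phi_eq_Sup(2)[OF top]]) auto
  then show "y \<le> net_integral E a + (Phi \<Omega> - net_integral \<Omega> a)"
    using y net_integral_mono[OF d(2) E] net_integral_increment_le[OF d(1) E] by linarith
qed simp

lemma cofinal_chain:
  "\<exists>aa. (\<forall>m n. m \<le> n \<longrightarrow> ord (aa m) (aa n))
    \<and> (\<forall>n. Phi \<Omega> - net_integral \<Omega> (aa n) < inverse (real (Suc n)))"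
proof -
  have "\<exists>a. Phi \<Omega> - inverse (real (Suc n)) < net_integral \<Omega> a" for n
  proof -
    have "Phi \<Omega> - inverse (real (Suc n)) < Sup (range (net_integral \<Omega>))" using Phi_eq_Sup(1)[OF top] by simp
    then show ?thesis using less_cSup_iff[OF _ Phi_eq_Sup(2)[OF top]] by auto
  qed
  then obtain bs where bs: "\<And>n. Phi \<Omega> - inverse (real (Suc n)) < net_integral \<Omega> (bs n)" by metis
  obtain aa where aa_mono: "\<And>m n. m \<le> n \<Longrightarrow> ord (aa m) (aa n)" and bs_aa: "\<And>n. ord (bs n) (aa n)"
    using directed_increasing_above[OF directed] by blast
  have "Phi \<Omega> - net_integral \<Omega> (aa n) < inverse (real (Suc n))" for n
    using bs[of n] net_integral_mono[OF bs_aa[of n] top] by linarith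
  then show ?thesis using aa_mono by blast
qed

text \<open>Along an increasing sequence of indices, \<open>h\<close> is approximated from below within
  \<open>2/(n+1)\<close> by an increasing sequence of simple functions: shift simple approximations down
  and take running maxima.\<close>
lemma increasing_lower_approximants:
  assumes aa_mono: "\<And>m n. m \<le> n \<Longrightarrow> ord (aa m) (aa n)"
  shows "\<exists>f. (\<forall>n. simple_fn \<Omega> M (f n)) \<and> (\<forall>n x. f n x \<le> f (Suc n) x)
    \<and> (\<forall>n. \<forall>x\<in>\<Omega>. \<bar>h (aa n) x - f n x\<bar> \<le> 2 * inverse (real (Suc n)))"
proof -
  have "\<forall>n. \<exists>t. simple_fn \<Omega> M t \<and> (\<forall>x\<in>\<Omega>. \<bar>h (aa n) x - t x\<bar> < inverse (real (Suc n)))"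
    using h_bfun unfolding bfun_def by simp
  then obtain s where s: "\<And>n. simple_fn \<Omega> M (s n)"
    and s_close: "\<And>n x. x \<in> \<Omega> \<Longrightarrow> \<bar>h (aa n) x - s n x\<bar> < inverse (real (Suc n))"
    by metis
  define g where "g n x = s n x - inverse (real (Suc n))" for n x
  have g_le: "g n x \<le> h (aa n) x" and g_ge: "h (aa n) x - 2 * inverse (real (Suc n)) \<le> g n x"
    if "x \<in> \<Omega>" for n x using s_close[OF that, of n] unfolding g_def by (auto simp: abs_less_iff)
  have gs: "simple_fn \<Omega> M (g n)" for n unfolding g_def by (rule simple_map[OF s])
  define f where "f = running_max g"
  have f: "\<And>n. simple_fn \<Omega> M (f n)" "\<And>n x. f n x \<le> f (Suc n) x"
    "\<And>n x. g n x \<le> f n x" "\<And>n x. \<exists>m\<le>n. f n x = g m x"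
    unfolding f_def using simple_running_max[OF gs] running_max_ge running_max_attained
    by (auto simp: running_max_Suc)
  have f_le: "f n x \<le> h (aa n) x" if x: "x \<in> \<Omega>" for n x
  proof -
    obtain m where "m \<le> n" "f n x = g m x" using f(4)[of n x] by blast
    then show ?thesis using g_le[OF x, of m] h_mono[OF aa_mono x, of m n] by simp
  qed
  have "\<bar>h (aa n) x - f n x\<bar> \<le> 2 * inverse (real (Suc n))" if x: "x \<in> \<Omega>" for n x
    using f_le[OF x, of n] f(3)[of n x] g_ge[OF x, of n] by auto
  then show ?thesis using f(1,2) by blast
qed

text \<open>The resulting increasing sequence approximates \<open>Phi\<close>: on each set \<open>E\<close> the gap to \<open>Phi\<close>
  is at most the deficit on \<open>\<Omega>\<close> plus the approximation error.\<close>
lemma monotone_sequence: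
  "\<exists>f. Phi_approximation f (c + 2) (\<lambda>n. inverse (real (Suc n)) * (2 * tv M nu \<Omega> + 1))
    \<and> (\<forall>n. \<forall>x\<in>\<Omega>. f n x \<le> f (Suc n) x)"
proof -
  define Tn where "Tn = tv M nu \<Omega>"
  obtain aa where aa_mono: "\<And>m n. m \<le> n \<Longrightarrow> ord (aa m) (aa n)"
    and deficit: "\<And>n. Phi \<Omega> - net_integral \<Omega> (aa n) < inverse (real (Suc n))"
    using cofinal_chain by blast
  obtain f where f: "\<And>n. simple_fn \<Omega> M (f n)" "\<And>n x. f n x \<le> f (Suc n) x"
    and fh: "\<And>n x. x \<in> \<Omega> \<Longrightarrow> \<bar>h (aa n) x - f n x\<bar> \<le> 2 * inverse (real (Suc n))"
    using increasing_lower_approximants[of aa] aa_mono by blast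
  have "\<bar>f n x\<bar> \<le> c + 2" if x: "x \<in> \<Omega>" for n x
    using fh[OF x, of n] h_bound[OF x, of "aa n"] inverse_le_1_iff[of "real (Suc n)"]
    by (auto simp: abs_le_iff)
  moreover have "\<bar>sint \<Omega> nu (\<lambda>x. f n x * indicator E x) - Phi E\<bar>
      \<le> inverse (real (Suc n)) * (2 * Tn + 1)" if E: "E \<in> M" for n E
  proof -
    have fE: "simple_fn \<Omega> M (\<lambda>x. f n x * indicator E x)" by (rule simple_comb[OF f(1) simple_indicator[OF E]])
    have "\<bar>net_integral E (aa n) - sint \<Omega> nu (\<lambda>x. f n x * indicator E x)\<bar> \<le> (2 * inverse (real (Suc n))) * Tn"
      unfolding net_integral_def Tn_def
      by (rule fa_int_approx[OF nu_ba bfun_indicator[OF h_bfun[of "aa n"] E] fE])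
        (use fh in \<open>auto simp: indicator_def\<close>)
    moreover have "net_integral E (aa n) \<le> Phi E"
      unfolding Phi_eq_Sup(1)[OF E] by (rule cSup_upper[OF _ Phi_eq_Sup(2)[OF E]]) auto
    ultimately show ?thesis
      using Phi_le_hint_plus_deficit[OF E, of "aa n"] deficit[of n]
      by (simp add: abs_le_iff algebra_simps)
  qed
  moreover have "(\<lambda>n. inverse (real (Suc n)) * (2 * Tn + 1)) \<longlonglongrightarrow> 0"
    using tendsto_mult[OF LIMSEQ_inverse_real_of_nat tendsto_const[of "2 * Tn + 1"]] by simp
  ultimately have "Phi_approximation f (c + 2) (\<lambda>n. inverse (real (Suc n)) * (2 * tv M nu \<Omega> + 1))"
    unfolding Phi_approximation_def Tn_def using f(1) c_nonneg by auto
  then show ?thesis using f(2) by blast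
qed

end

theorem mainTheorem9:
  fixes \<Omega> :: "'a set" and M :: "'a set set" and lam :: "'a set \<Rightarrow> real"
    and ord :: "'i \<Rightarrow> 'i \<Rightarrow> bool" and L :: "('i \<Rightarrow> real) \<Rightarrow> real"
    and h :: "'i \<Rightarrow> 'a \<Rightarrow> real"
  assumes "algebra \<Omega> M" and "lam \<in> ba M"
    and "directed ord" and "banach_limit ord L"
    and "\<forall>a. bfun \<Omega> M (h a)" and "\<exists>c. \<forall>a. \<forall>x\<in>\<Omega>. \<bar>h a x\<bar> \<le> c"
  shows "(\<exists>f :: nat \<Rightarrow> 'a \<Rightarrow> real.
            (\<forall>n. simple_fn \<Omega> M (f n)) \<and> (\<exists>c. \<forall>n. \<forall>x\<in>\<Omega>. \<bar>f n x\<bar> \<le> c)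
          \<and> (\<forall>mu\<in>ba_ac M lam. l1_cauchy \<Omega> M mu f)
          \<and> (\<forall>A\<in>M. \<forall>mu\<in>ba_ac M lam.
               (\<lambda>n. fa_int \<Omega> M mu (\<lambda>x. f n x * indicator A x))
                 \<longlonglongrightarrow> L (\<lambda>a. fa_int \<Omega> M mu (\<lambda>x. h a x * indicator A x))))
       \<and> ((\<forall>a b. ord a b \<longrightarrow> (\<forall>x\<in>\<Omega>. h a x \<le> h b x)) \<longrightarrow>
          (\<exists>f :: nat \<Rightarrow> 'a \<Rightarrow> real.
            (\<forall>n. simple_fn \<Omega> M (f n)) \<and> (\<exists>c. \<forall>n. \<forall>x\<in>\<Omega>. \<bar>f n x\<bar> \<le> c)
          \<and> (\<forall>mu\<in>ba_ac M lam. l1_cauchy \<Omega> M mu f)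
          \<and> (\<forall>A\<in>M. \<forall>mu\<in>ba_ac M lam.
               (\<lambda>n. fa_int \<Omega> M mu (\<lambda>x. f n x * indicator A x))
                 \<longlonglongrightarrow> L (\<lambda>a. fa_int \<Omega> M mu (\<lambda>x. h a x * indicator A x)))
          \<and> (\<forall>n. \<forall>x\<in>\<Omega>. f n x \<le> f (Suc n) x)))"
proof -
  obtain c where c: "\<forall>a. \<forall>x\<in>\<Omega>. \<bar>h a x\<bar> \<le> c" using assms(6) by blast
  have setting: "net_setting \<Omega> M lam ord L h (max c 0)"
    using assms(1,2,4,5) c
    by (intro net_setting.intro net_setting_axioms.intro) (auto simp: le_max_iff_disj)
  then interpret net_setting \<Omega> M lam ord L h "max c 0" .
  have general: "\<exists>f. represents f"
    using step_density_sequence approximation_represents by blast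
  have monotone: "\<exists>f. represents f \<and> (\<forall>n. \<forall>x\<in>\<Omega>. f n x \<le> f (Suc n) x)"
    if "\<forall>a b. ord a b \<longrightarrow> (\<forall>x\<in>\<Omega>. h a x \<le> h b x)"
  proof -
    have "monotone_net_setting \<Omega> M lam ord L h (max c 0)"
      using setting assms(3) that
      by (intro monotone_net_setting.intro monotone_net_setting_axioms.intro) auto
    then interpret monotone_net_setting \<Omega> M lam ord L h "max c 0" .
    show ?thesis using monotone_sequence approximation_represents by blast
  qed
  show ?thesis using general monotone unfolding represents_def by blast
qed

end
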